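(* For any $n\ge2$, there exists a $\Sigma^0_n$ equivalence relation on $2^\mathbb{N}$ which is not $\Pi^0_n$-graphable. Also, for any $n\ge1$, there exists a $\Sigma^0_n$ equivalence relation on $\mathbb{N}$ which is not $\Pi^0_n$-graphable.
   Context: $E$ is $\Gamma$-graphable if there is a simple undirected graph $G$ in $\Gamma$ whose connectedness relation (connected by a finite path) equals $E$. Pointclasses are lightface. *)

theory Defs
  imports Main
begin

text \<open>Lightface arithmetical pointclasses are defined via formulas of first-order
arithmetic (language 0, S, +, *, =, <) extended by membership atoms X_i(t) for
real (element of Cantor space) variables X_i.  Number variables use de Bruijn
indices.\<close>

datatype trm = Var nat | Zero | Sc trm | Pl trm trm | Tm trm trm

datatype fm =
    Eq trm trm | Lt trm trm | Mem nat trm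
  | Neg fm | Conj fm fm | Disj fm fm
  | BEx trm fm | BAll trm fm
  | Ex fm | All fm

primrec evt :: "(nat \<Rightarrow> nat) \<Rightarrow> trm \<Rightarrow> nat" where
  "evt e (Var i) = e i"
| "evt e Zero = 0"
| "evt e (Sc t) = Suc (evt e t)"
| "evt e (Pl s t) = evt e s + evt e t"
| "evt e (Tm s t) = evt e s * evt e t"

primrec evf :: "(nat \<Rightarrow> nat) \<Rightarrow> (nat \<Rightarrow> nat \<Rightarrow> bool) \<Rightarrow> fm \<Rightarrow> bool" where
  "evf e X (Eq s t) = (evt e s = evt e t)"
| "evf e X (Lt s t) = (evt e s < evt e t)"
| "evf e X (Mem i t) = X i (evt e t)"
| "evf e X (Neg p) = (\<not> evf e X p)"
| "evf e X (Conj p q) = (evf e X p \<and> evf e X q)"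
| "evf e X (Disj p q) = (evf e X p \<or> evf e X q)"
| "evf e X (BEx t p) = (\<exists>x < evt e t. evf (case_nat x e) X p)"
| "evf e X (BAll t p) = (\<forall>x < evt e t. evf (case_nat x e) X p)"
| "evf e X (Ex p) = (\<exists>x. evf (case_nat x e) X p)"
| "evf e X (All p) = (\<forall>x. evf (case_nat x e) X p)"

primrec delta0 :: "fm \<Rightarrow> bool" where
  "delta0 (Eq s t) = True"
| "delta0 (Lt s t) = True"
| "delta0 (Mem i t) = True"
| "delta0 (Neg p) = delta0 p"
| "delta0 (Conj p q) = (delta0 p \<and> delta0 q)"
| "delta0 (Disj p q) = (delta0 p \<and> delta0 q)"
| "delta0 (BEx t p) = delta0 p"
| "delta0 (BAll t p) = delta0 p"
| "delta0 (Ex p) = False"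
| "delta0 (All p) = False"

primrec sigma_fm :: "nat \<Rightarrow> fm \<Rightarrow> bool" where
  "sigma_fm 0 p = delta0 p"
| "sigma_fm (Suc n) p = (\<exists>q. p = Ex (Neg q) \<and> sigma_fm n q)"

type_synonym cantor = "nat \<Rightarrow> bool"

definition Sigma_cantor2 :: "nat \<Rightarrow> (cantor \<times> cantor) set \<Rightarrow> bool" where
  "Sigma_cantor2 n S \<longleftrightarrow> (\<exists>p. sigma_fm n p \<and>
     (\<forall>x y. (x, y) \<in> S \<longleftrightarrow>
        evf (\<lambda>_. 0) (\<lambda>i. if i = 0 then x else if i = 1 then y else (\<lambda>_. False)) p))"

definition Pi_cantor2 :: "nat \<Rightarrow> (cantor \<times> cantor) set \<Rightarrow> bool" where
  "Pi_cantor2 n S \<longleftrightarrow> Sigma_cantor2 n (- S)"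

definition Sigma_nat2 :: "nat \<Rightarrow> (nat \<times> nat) set \<Rightarrow> bool" where
  "Sigma_nat2 n S \<longleftrightarrow> (\<exists>p. sigma_fm n p \<and>
     (\<forall>a b. (a, b) \<in> S \<longleftrightarrow>
        evf (\<lambda>i. if i = 0 then a else if i = 1 then b else 0) (\<lambda>_ _. False) p))"

definition Pi_nat2 :: "nat \<Rightarrow> (nat \<times> nat) set \<Rightarrow> bool" where
  "Pi_nat2 n S \<longleftrightarrow> Sigma_nat2 n (- S)"

definition graphable :: "('a rel \<Rightarrow> bool) \<Rightarrow> 'a rel \<Rightarrow> bool" where
  "graphable \<Gamma> E \<longleftrightarrow> (\<exists>G. \<Gamma> G \<and> sym G \<and> irrefl G \<and> G\<^sup>* = E)"

end

theory Submission
  imports Defs "HOL-Library.Nat_Bijection" "HOL-Number_Theory.Cong"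
begin

text \<open>
  The proof is a diagonal argument. A \<open>\<Delta>\<^sub>0\<close> formula is false under an assignment iff some
  finite computation record, coded with Goedel's \<open>\<beta>\<close>-function, derives the truth value 0 by
  the Tarski clauses; checking a coded record is \<open>\<Delta>\<^sub>0\<close> because all witnesses are bounded by
  the code. Hence falsity of \<open>\<Delta>\<^sub>0\<close> formulas is \<open>\<Sigma>\<^sub>1\<close>, and prefixing \<open>k\<close> quantifiers gives a
  relation \<open>sigma_univ k\<close> that is universal for \<open>\<Sigma>\<^sub>k\<^sub>+\<^sub>1\<close> formulas. Its diagonal
  \<open>D = {h. sigma_univ k h \<langle>h\<rangle>}\<close> is \<open>\<Sigma>\<^sub>k\<^sub>+\<^sub>1\<close>, but its complement is not.

  Let \<open>E\<close> join \<open>2h\<close> and \<open>2h + 1\<close> exactly when \<open>h \<in> D\<close>. This is a \<open>\<Sigma>\<^sub>k\<^sub>+\<^sub>1\<close> equivalence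
  relation whose classes have at most two elements, so the only irreflexive graph with
  connectedness relation \<open>E\<close> is \<open>E\<close> minus the identity. If that graph were \<open>\<Pi>\<^sub>k\<^sub>+\<^sub>1\<close>, then
  \<open>h \<notin> D\<close> iff \<open>(2h, 2h + 1)\<close> is not an edge would make the complement of \<open>D\<close> \<open>\<Sigma>\<^sub>k\<^sub>+\<^sub>1\<close>.
  On \<open>2\<^sup>\<nat>\<close>, \<open>E\<close> is copied onto the characteristic functions of singletons; recognising
  such a function costs a universal quantifier, which is why \<open>n \<ge> 2\<close> there.
\<close>

section \<open>Substitution and \<open>\<Sigma>\<close>-definability\<close>

primrec subst_trm :: "(nat \<Rightarrow> trm) \<Rightarrow> trm \<Rightarrow> trm" where
  "subst_trm \<sigma> (Var i) = \<sigma> i"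
| "subst_trm \<sigma> Zero = Zero"
| "subst_trm \<sigma> (Sc t) = Sc (subst_trm \<sigma> t)"
| "subst_trm \<sigma> (Pl s t) = Pl (subst_trm \<sigma> s) (subst_trm \<sigma> t)"
| "subst_trm \<sigma> (Tm s t) = Tm (subst_trm \<sigma> s) (subst_trm \<sigma> t)"

definition lift_trm :: "trm \<Rightarrow> trm" where
  "lift_trm = subst_trm (\<lambda>i. Var (Suc i))"

definition subst_up :: "(nat \<Rightarrow> trm) \<Rightarrow> nat \<Rightarrow> trm" where
  "subst_up \<sigma> = case_nat (Var 0) (\<lambda>i. lift_trm (\<sigma> i))"

definition chi :: "nat \<Rightarrow> cantor" where
  "chi a = (\<lambda>i. i = a)"

definition cantor_env :: "cantor \<Rightarrow> cantor \<Rightarrow> nat \<Rightarrow> nat \<Rightarrow> bool" where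
  "cantor_env x y i = (if i = 0 then x else if i = 1 then y else (\<lambda>_. False))"

text \<open>With \<open>Some (A, B)\<close> the set atoms are eliminated as well: the set variables 0 and 1
  are read as the singletons \<open>{A}\<close> and \<open>{B}\<close>, all others as empty (\<open>evf_subst_fm\<close>).\<close>

primrec subst_fm :: "(nat \<Rightarrow> trm) \<Rightarrow> (trm \<times> trm) option \<Rightarrow> fm \<Rightarrow> fm" where
  "subst_fm \<sigma> pts (Eq s t) = Eq (subst_trm \<sigma> s) (subst_trm \<sigma> t)"
| "subst_fm \<sigma> pts (Lt s t) = Lt (subst_trm \<sigma> s) (subst_trm \<sigma> t)"
| "subst_fm \<sigma> pts (Mem i t) = (case pts of
      None \<Rightarrow> Mem i (subst_trm \<sigma> t)
    | Some (A, B) \<Rightarrow> if i = 0 then Eq (subst_trm \<sigma> t) A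
        else if i = 1 then Eq (subst_trm \<sigma> t) B else Neg (Eq Zero Zero))"
| "subst_fm \<sigma> pts (Neg p) = Neg (subst_fm \<sigma> pts p)"
| "subst_fm \<sigma> pts (Conj p q) = Conj (subst_fm \<sigma> pts p) (subst_fm \<sigma> pts q)"
| "subst_fm \<sigma> pts (Disj p q) = Disj (subst_fm \<sigma> pts p) (subst_fm \<sigma> pts q)"
| "subst_fm \<sigma> pts (BEx t p) =
     BEx (subst_trm \<sigma> t) (subst_fm (subst_up \<sigma>) (map_option (map_prod lift_trm lift_trm) pts) p)"
| "subst_fm \<sigma> pts (BAll t p) =
     BAll (subst_trm \<sigma> t) (subst_fm (subst_up \<sigma>) (map_option (map_prod lift_trm lift_trm) pts) p)"
| "subst_fm \<sigma> pts (Ex p) = Ex (subst_fm (subst_up \<sigma>) (map_option (map_prod lift_trm lift_trm) pts) p)"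
| "subst_fm \<sigma> pts (All p) = All (subst_fm (subst_up \<sigma>) (map_option (map_prod lift_trm lift_trm) pts) p)"

abbreviation subst_vars :: "(nat \<Rightarrow> trm) \<Rightarrow> fm \<Rightarrow> fm" where
  "subst_vars \<sigma> p \<equiv> subst_fm \<sigma> None p"

lemma evt_subst_trm: "evt e (subst_trm \<sigma> t) = evt (\<lambda>i. evt e (\<sigma> i)) t"
  by (induction t) auto

lemma evt_lift_trm [simp]: "evt (case_nat x e) (lift_trm t) = evt e t"
  by (simp add: lift_trm_def evt_subst_trm)

lemma evt_subst_up: "(\<lambda>i. evt (case_nat x e) (subst_up \<sigma> i)) = case_nat x (\<lambda>i. evt e (\<sigma> i))"
  by (rule ext) (simp add: subst_up_def split: nat.split)

lemma evf_subst_fm: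
  "evf e X (subst_fm \<sigma> pts p) = evf (\<lambda>i. evt e (\<sigma> i))
     (case pts of None \<Rightarrow> X | Some (A, B) \<Rightarrow> cantor_env (chi (evt e A)) (chi (evt e B))) p"
  by (induction p arbitrary: e \<sigma> pts)
    (auto simp: evt_subst_trm evt_subst_up cantor_env_def chi_def split: option.split)

lemma evf_subst_vars: "evf e X (subst_vars \<sigma> p) = evf (\<lambda>i. evt e (\<sigma> i)) X p"
  by (simp add: evf_subst_fm)

lemma delta0_subst_fm [simp]: "delta0 (subst_fm \<sigma> pts p) = delta0 p"
  by (induction p arbitrary: \<sigma> pts) (auto split: option.split)

lemma sigma_fm_subst_fm: "sigma_fm n p \<Longrightarrow> sigma_fm n (subst_fm \<sigma> pts p)"
  by (induction n arbitrary: \<sigma> pts p) auto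

primrec exneg :: "nat \<Rightarrow> fm \<Rightarrow> fm" where
  "exneg 0 d = d"
| "exneg (Suc n) d = Ex (Neg (exneg n d))"

lemma sigma_fm_iff_exneg: "sigma_fm n p \<longleftrightarrow> (\<exists>d. delta0 d \<and> p = exneg n d)"
  by (induction n arbitrary: p) auto

lemma sigma_fm_exneg: "delta0 d \<Longrightarrow> sigma_fm n (exneg n d)"
  using sigma_fm_iff_exneg by blast

text \<open>\<open>prepend_env ys e\<close> is the environment inside a block of \<open>length ys\<close> quantifiers,
  \<open>ys ! 0\<close> being the value of the innermost one.\<close>

definition prepend_env :: "nat list \<Rightarrow> (nat \<Rightarrow> nat) \<Rightarrow> nat \<Rightarrow> nat" where
  "prepend_env ys e i = (if i < length ys then ys ! i else e (i - length ys))"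

lemma prepend_env_snoc: "prepend_env ys (case_nat v e) = prepend_env (ys @ [v]) e"
proof (rule ext)
  fix i
  show "prepend_env ys (case_nat v e) i = prepend_env (ys @ [v]) e i"
  proof (cases "i - length ys")
    case (Suc k)
    then have "i - Suc (length ys) = k" by arith
    with Suc show ?thesis by (auto simp: prepend_env_def nth_append)
  qed (auto simp: prepend_env_def nth_append)
qed

lemma prepend_env_Nil [simp]: "prepend_env [] e = e"
  by (rule ext) (simp add: prepend_env_def)

lemma evf_exneg_cong:
  assumes "\<And>ys. length ys = m \<Longrightarrow> evf (prepend_env ys e1) X1 d1 = evf (prepend_env ys e2) X2 d2"
  shows "evf e1 X1 (exneg m d1) = evf e2 X2 (exneg m d2)"
  using assms
proof (induction m arbitrary: e1 e2)
  case 0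
  then show ?case by (metis prepend_env_Nil exneg.simps(1) list.size(3))
next
  case (Suc m)
  have "evf (case_nat v e1) X1 (exneg m d1) = evf (case_nat v e2) X2 (exneg m d2)" for v
    by (rule Suc.IH) (simp add: prepend_env_snoc Suc.prems)
  then show ?case by simp
qed

text \<open>A \<open>\<Delta>\<^sub>0\<close> formula is pushed into the matrix of a \<open>\<Sigma>\<^sub>m\<close> block; each of the \<open>m\<close>
  negations it passes swaps conjunction and disjunction.\<close>

fun exneg_comb :: "bool \<Rightarrow> nat \<Rightarrow> fm \<Rightarrow> fm \<Rightarrow> fm" where
  "exneg_comb cj 0 d t = (if cj then Conj d t else Disj d t)"
| "exneg_comb cj (Suc m) d t = exneg_comb (\<not> cj) m d (Neg t)"

lemma delta0_exneg_comb: "delta0 d \<Longrightarrow> delta0 t \<Longrightarrow> delta0 (exneg_comb cj m d t)"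
  by (induction cj m d t rule: exneg_comb.induct) auto

lemma evf_exneg_comb:
  assumes "\<And>ys. length ys = m \<Longrightarrow> evf (prepend_env ys e) X t = tv"
  shows "evf e X (exneg m (exneg_comb cj m d t)) =
    (if cj then evf e X (exneg m d) \<and> tv else evf e X (exneg m d) \<or> tv)"
  using assms
proof (induction m arbitrary: e cj t tv)
  case 0
  then show ?case by (metis prepend_env_Nil exneg_comb.simps(1) evf.simps(5,6) exneg.simps(1) list.size(3))
next
  case (Suc m)
  have "evf (case_nat v e) X (exneg m (exneg_comb (\<not> cj) m d (Neg t))) =
     (if \<not> cj then evf (case_nat v e) X (exneg m d) \<and> \<not> tv
      else evf (case_nat v e) X (exneg m d) \<or> \<not> tv)" for v
    by (rule Suc.IH) (simp add: prepend_env_snoc Suc.prems)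
  then show ?case by auto
qed

lemma evf_prepend_env_shift:
  "length ys = m \<Longrightarrow> evf (prepend_env ys e) X (subst_vars (\<lambda>i. Var (i + m)) p) = evf e X p"
  by (simp add: evf_subst_vars prepend_env_def)

definition sigma_definable :: "nat \<Rightarrow> ((nat \<Rightarrow> nat) \<Rightarrow> (nat \<Rightarrow> nat \<Rightarrow> bool) \<Rightarrow> bool) \<Rightarrow> bool" where
  "sigma_definable n R \<longleftrightarrow> (\<exists>p. sigma_fm n p \<and> (\<forall>e X. evf e X p = R e X))"

lemma sigma_definableI: "sigma_fm n p \<Longrightarrow> (\<And>e X. evf e X p = R e X) \<Longrightarrow> sigma_definable n R"
  unfolding sigma_definable_def by blast

lemma sigma_definable_exneg:
  "sigma_definable n R \<Longrightarrow> \<exists>d. delta0 d \<and> (\<forall>e X. evf e X (exneg n d) = R e X)"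
  unfolding sigma_definable_def by (metis sigma_fm_iff_exneg)

lemma sigma_definable_cong:
  "sigma_definable n R \<Longrightarrow> (\<And>e X. R e X \<longleftrightarrow> R' e X) \<Longrightarrow> sigma_definable n R'"
  unfolding sigma_definable_def by simp

lemma sigma_definable_subst:
  "sigma_definable n R \<Longrightarrow> sigma_definable n (\<lambda>e X. R (\<lambda>i. evt e (\<sigma> i)) X)"
  unfolding sigma_definable_def by (metis sigma_fm_subst_fm evf_subst_vars)

lemma sigma_definable_comb:
  assumes "sigma_definable m R" "delta0 t"
  shows "sigma_definable m (\<lambda>e X. if cj then R e X \<and> evf e X t else R e X \<or> evf e X t)"
proof -
  obtain d where d: "delta0 d" "\<And>e X. evf e X (exneg m d) = R e X"
    using sigma_definable_exneg[OF assms(1)] by blast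
  let ?q = "exneg m (exneg_comb cj m d (subst_vars (\<lambda>i. Var (i + m)) t))"
  show ?thesis
  proof (rule sigma_definableI)
    show "sigma_fm m ?q" using d(1) assms(2) by (intro sigma_fm_exneg delta0_exneg_comb) simp_all
    show "evf e X ?q = (if cj then R e X \<and> evf e X t else R e X \<or> evf e X t)" for e X
      by (subst evf_exneg_comb[where tv = "evf e X t"]) (simp_all add: evf_prepend_env_shift d(2))
  qed
qed

lemma sigma_definable_conj:
  "sigma_definable m R \<Longrightarrow> delta0 t \<Longrightarrow> sigma_definable m (\<lambda>e X. R e X \<and> evf e X t)"
  using sigma_definable_comb[where cj = True] by simp

lemma sigma_definable_disj:
  "sigma_definable m R \<Longrightarrow> delta0 t \<Longrightarrow> sigma_definable m (\<lambda>e X. R e X \<or> evf e X t)"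
  using sigma_definable_comb[where cj = False] by simp

definition pair_eq_fm :: "trm \<Rightarrow> trm \<Rightarrow> trm \<Rightarrow> fm" where
  "pair_eq_fm w a b = Eq (Pl w w) (Pl (Tm (Pl a b) (Sc (Pl a b))) (Pl a a))"

lemma double_prod_encode_iff: "w + w = (a + b) * Suc (a + b) + (a + a) \<longleftrightarrow> w = prod_encode (a, b)"
proof -
  have "2 * triangle n = n * Suc n" for n
    by (induction n) (auto simp: triangle_def)
  from this[of "a + b"] have "2 * prod_encode (a, b) = (a + b) * Suc (a + b) + (a + a)"
    by (simp add: prod_encode_def algebra_simps)
  then show ?thesis by auto
qed

text \<open>Two existential quantifiers are contracted into one via the Cantor pairing: in the
  matrix, the outermost block variable (de Bruijn index \<open>m\<close>) is decoded by bounded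
  quantifiers into the two variables it replaces.\<close>

definition unpair_subst :: "nat \<Rightarrow> nat \<Rightarrow> trm" where
  "unpair_subst m i = (if i < m then Var (i + 2) else if i = m then Var 0
     else if i = Suc m then Var 1 else Var (Suc i))"

definition exneg_unpair :: "nat \<Rightarrow> fm \<Rightarrow> fm" where
  "exneg_unpair m d = BEx (Sc (Var m)) (BEx (Sc (Var (Suc m)))
      (Conj (pair_eq_fm (Var (m + 2)) (Var 1) (Var 0)) (subst_vars (unpair_subst m) d)))"

lemma delta0_exneg_unpair: "delta0 d \<Longrightarrow> delta0 (exneg_unpair m d)"
  by (simp add: exneg_unpair_def pair_eq_fm_def)

lemma evf_exneg_unpair_matrix:
  assumes "length ys = m" "prod_decode w = (a, b)"
  shows "evf (prepend_env ys (case_nat w e)) X (exneg_unpair m d) =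
    evf (prepend_env ys (case_nat b (case_nat a e))) X d"
proof -
  have w: "w = prod_encode (a, b)" using assms(2) by (metis prod_decode_inverse)
  have ab: "a \<le> w" "b \<le> w" using w le_prod_encode_1 le_prod_encode_2 by auto
  have env: "(\<lambda>i. evt (case_nat b' (case_nat a' (prepend_env ys (case_nat w e)))) (unpair_subst m i)) =
       prepend_env ys (case_nat b' (case_nat a' e))" for a' b'
  proof (rule ext)
    fix i
    consider "i \<le> Suc m" | k where "i = Suc (Suc m) + k" by (metis le_add_diff_inverse not_less_eq_eq)
    then show "evt (case_nat b' (case_nat a' (prepend_env ys (case_nat w e)))) (unpair_subst m i) =
      prepend_env ys (case_nat b' (case_nat a' e)) i"
      by cases (use assms(1) in \<open>auto simp: unpair_subst_def prepend_env_def le_Suc_eq\<close>)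
  qed
  have "evf (prepend_env ys (case_nat w e)) X (exneg_unpair m d) =
     (\<exists>a'<Suc w. \<exists>b'<Suc w. w + w = (a' + b') * Suc (a' + b') + (a' + a') \<and>
        evf (prepend_env ys (case_nat b' (case_nat a' e))) X d)"
    using assms(1) by (simp add: exneg_unpair_def pair_eq_fm_def evf_subst_vars env prepend_env_def)
  also have "\<dots> = evf (prepend_env ys (case_nat b (case_nat a e))) X d"
    unfolding double_prod_encode_iff using ab w by auto
  finally show ?thesis .
qed

lemma evf_exneg_unpair:
  "evf e X (exneg (Suc m) (exneg_unpair m d)) = (\<exists>v. evf (case_nat v e) X (exneg (Suc m) d))"
proof -
  have "evf (case_nat w e) X (exneg m (exneg_unpair m d)) =
      evf (case_nat (snd (prod_decode w)) (case_nat (fst (prod_decode w)) e)) X (exneg m d)" for w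
    by (rule evf_exneg_cong) (rule evf_exneg_unpair_matrix, auto)
  then have "evf e X (exneg (Suc m) (exneg_unpair m d)) =
     (\<exists>w. \<not> evf (case_nat (snd (prod_decode w)) (case_nat (fst (prod_decode w)) e)) X (exneg m d))"
    by simp
  also have "\<dots> = (\<exists>a b. \<not> evf (case_nat b (case_nat a e)) X (exneg m d))"
    by (metis fst_conv prod_encode_inverse snd_conv)
  finally show ?thesis by simp
qed

lemma sigma_definable_ex:
  assumes "sigma_definable (Suc m) R"
  shows "sigma_definable (Suc m) (\<lambda>e X. \<exists>v. R (case_nat v e) X)"
proof -
  obtain d where d: "delta0 d" "\<And>e X. evf e X (exneg (Suc m) d) = R e X"
    using sigma_definable_exneg[OF assms] by blast
  show ?thesis
  proof (rule sigma_definableI)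
    show "sigma_fm (Suc m) (exneg (Suc m) (exneg_unpair m d))"
      by (simp only: sigma_fm_exneg delta0_exneg_unpair d(1))
    show "evf e X (exneg (Suc m) (exneg_unpair m d)) = (\<exists>v. R (case_nat v e) X)" for e X
      by (simp only: evf_exneg_unpair d(2))
  qed
qed

text \<open>A universal quantifier in front of a \<open>\<Delta>\<^sub>0\<close> formula is absorbed into the
  second quantifier of a \<open>\<Sigma>\<^sub>m\<^sub>+\<^sub>2\<close> block.\<close>

lemma sigma_definable_conj_all:
  assumes "sigma_definable (Suc (Suc m)) R" "delta0 c"
  shows "sigma_definable (Suc (Suc m)) (\<lambda>e X. (\<forall>i. evf (case_nat i e) X c) \<and> R e X)"
proof -
  obtain d where d: "delta0 d" "\<And>e X. evf e X (exneg (Suc (Suc m)) d) = R e X"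
    using sigma_definable_exneg[OF assms(1)] by blast
  define \<tau> where "\<tau> = case_nat (Var m) (\<lambda>k. Var (m + 2 + k))"
  let ?q = "exneg (Suc (Suc m)) (exneg_comb True m d (subst_vars \<tau> c))"
  have c: "evf (prepend_env ys (case_nat y2 (case_nat y1 e))) X (subst_vars \<tau> c) = evf (case_nat y2 e) X c"
    if "length ys = m" for ys y2 y1 e X
  proof -
    have "(\<lambda>i. evt (prepend_env ys (case_nat y2 (case_nat y1 e))) (\<tau> i)) = case_nat y2 e"
      by (rule ext) (use that in \<open>auto simp: \<tau>_def prepend_env_def split: nat.split\<close>)
    then show ?thesis by (simp add: evf_subst_vars)
  qed
  have "evf (case_nat y2 (case_nat y1 e)) X (exneg m (exneg_comb True m d (subst_vars \<tau> c))) =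
     (evf (case_nat y2 (case_nat y1 e)) X (exneg m d) \<and> evf (case_nat y2 e) X c)" for y1 y2 e X
    by (subst evf_exneg_comb[where tv = "evf (case_nat y2 e) X c"]) (auto simp: c)
  then have "evf e X ?q = ((\<forall>i. evf (case_nat i e) X c) \<and> R e X)" for e X
    by (auto simp flip: d(2))
  moreover have "sigma_fm (Suc (Suc m)) ?q"
    using d(1) assms(2) by (intro sigma_fm_exneg delta0_exneg_comb) simp_all
  ultimately show ?thesis by (intro sigma_definableI)
qed

section \<open>Computation records\<close>

definition cpair :: "nat \<Rightarrow> nat \<Rightarrow> nat" where
  "cpair a b = (a + b) * (a + b) + a"

lemma cpair_ge1: "a \<le> cpair a b" and cpair_ge2: "b \<le> cpair a b"
proof -
  show "a \<le> cpair a b" by (simp add: cpair_def)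
  have "b \<le> (a + b) * (a + b)"
    by (metis add_leD2 le_square)
  then show "b \<le> cpair a b" by (simp add: cpair_def)
qed

lemma cpair_less_if_sum_less:
  assumes "a + b < a' + b'"
  shows "cpair a b < cpair a' b'"
proof -
  have "cpair a b < Suc (a + b) * Suc (a + b)" by (simp add: cpair_def)
  also have "\<dots> \<le> (a' + b') * (a' + b')" using assms by (intro mult_le_mono) simp_all
  also have "\<dots> \<le> cpair a' b'" by (simp add: cpair_def)
  finally show ?thesis .
qed

lemma cpair_inj: "cpair a b = cpair a' b' \<Longrightarrow> a = a' \<and> b = b'"
proof -
  assume h: "cpair a b = cpair a' b'"
  then have "a + b = a' + b'" using cpair_less_if_sum_less by (metis less_irrefl nat_neq_iff)
  then show ?thesis using h by (simp add: cpair_def)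
qed

lemma cpair_eq_iff [simp]: "cpair a b = cpair a' b' \<longleftrightarrow> a = a' \<and> b = b'"
  using cpair_inj by blast

definition ccons :: "nat \<Rightarrow> nat \<Rightarrow> nat" where
  "ccons x r = Suc (cpair x r)"

primrec code_list :: "nat list \<Rightarrow> nat" where
  "code_list [] = 0"
| "code_list (x # xs) = ccons x (code_list xs)"

definition list_env :: "nat list \<Rightarrow> nat \<Rightarrow> nat" where
  "list_env xs i = (if i < length xs then xs ! i else 0)"

lemma list_env_Cons: "list_env (x # xs) = case_nat x (list_env xs)"
  by (rule ext) (simp add: list_env_def split: nat.split)

primrec code_trm :: "trm \<Rightarrow> nat" where
  "code_trm (Var i) = 5 * i"
| "code_trm Zero = 1"
| "code_trm (Sc t) = 5 * code_trm t + 2"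
| "code_trm (Pl a b) = 5 * cpair (code_trm a) (code_trm b) + 3"
| "code_trm (Tm a b) = 5 * cpair (code_trm a) (code_trm b) + 4"

primrec code_fm :: "fm \<Rightarrow> nat" where
  "code_fm (Eq a b) = 10 * cpair (code_trm a) (code_trm b)"
| "code_fm (Lt a b) = 10 * cpair (code_trm a) (code_trm b) + 1"
| "code_fm (Mem i t) = 10 * cpair i (code_trm t) + 2"
| "code_fm (Neg p) = 10 * code_fm p + 3"
| "code_fm (Conj p q) = 10 * cpair (code_fm p) (code_fm q) + 4"
| "code_fm (Disj p q) = 10 * cpair (code_fm p) (code_fm q) + 5"
| "code_fm (BEx t p) = 10 * cpair (code_trm t) (code_fm p) + 6"
| "code_fm (BAll t p) = 10 * cpair (code_trm t) (code_fm p) + 7"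
| "code_fm (Ex p) = 10 * code_fm p + 8"
| "code_fm (All p) = 10 * code_fm p + 9"

text \<open>A computation record is a set \<open>mem\<close> of entries \<open>trm_entry t r v\<close> (the term with code
  \<open>t\<close> has value \<open>v\<close> under the assignment coded by \<open>r\<close>) and \<open>fm_entry f r b\<close> (the formula
  with code \<open>f\<close> has truth value \<open>b\<close>). An entry is justified if one Tarski clause derives it from
  other entries of the record; bounding all witnesses by \<open>c\<close> makes this a \<open>\<Delta>\<^sub>0\<close> condition.
  Set atoms are read as false, i.e. with all set parameters empty.\<close>

definition fm_entry :: "nat \<Rightarrow> nat \<Rightarrow> nat \<Rightarrow> nat" where
  "fm_entry f r b = 2 * cpair (cpair f r) b"

definition trm_entry :: "nat \<Rightarrow> nat \<Rightarrow> nat \<Rightarrow> nat" where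
  "trm_entry t r v = Suc (2 * cpair (cpair t r) v)"

definition trm_justified :: "(nat \<Rightarrow> bool) \<Rightarrow> nat \<Rightarrow> nat \<Rightarrow> nat \<Rightarrow> nat \<Rightarrow> bool" where
  "trm_justified mem c t r v =
    ((\<exists>i\<le>c. t = 5*i \<and> ((r = 0 \<and> v = 0) \<or>
        (\<exists>x\<le>c. \<exists>r'\<le>c. r = ccons x r' \<and>
          ((i = 0 \<and> v = x) \<or> (\<exists>i'\<le>c. i = Suc i' \<and> mem (trm_entry (5*i') r' v)))))) \<or>
     (t = 1 \<and> v = 0) \<or>
     (\<exists>t'\<le>c. t = 5*t' + 2 \<and> (\<exists>v'\<le>c. v = Suc v' \<and> mem (trm_entry t' r v'))) \<or>
     (\<exists>s\<le>c. \<exists>t'\<le>c. t = 5 * cpair s t' + 3 \<and>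
        (\<exists>v1\<le>c. \<exists>v2\<le>c. v = v1 + v2 \<and> mem (trm_entry s r v1) \<and> mem (trm_entry t' r v2))) \<or>
     (\<exists>s\<le>c. \<exists>t'\<le>c. t = 5 * cpair s t' + 4 \<and>
        (\<exists>v1\<le>c. \<exists>v2\<le>c. v = v1 * v2 \<and> mem (trm_entry s r v1) \<and> mem (trm_entry t' r v2))))"

definition fm_justified :: "(nat \<Rightarrow> bool) \<Rightarrow> nat \<Rightarrow> nat \<Rightarrow> nat \<Rightarrow> nat \<Rightarrow> bool" where
  "fm_justified mem c f r b =
    ((\<exists>s\<le>c. \<exists>t\<le>c. f = 10 * cpair s t \<and> (\<exists>v1\<le>c. \<exists>v2\<le>c. mem (trm_entry s r v1) \<and>
        mem (trm_entry t r v2) \<and> ((b = 1 \<and> v1 = v2) \<or> (b \<noteq> 1 \<and> v1 \<noteq> v2)))) \<or>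
     (\<exists>s\<le>c. \<exists>t\<le>c. f = 10 * cpair s t + 1 \<and> (\<exists>v1\<le>c. \<exists>v2\<le>c. mem (trm_entry s r v1) \<and>
        mem (trm_entry t r v2) \<and> ((b = 1 \<and> v1 < v2) \<or> (b \<noteq> 1 \<and> \<not> v1 < v2)))) \<or>
     (\<exists>i\<le>c. \<exists>t\<le>c. f = 10 * cpair i t + 2 \<and> b = 0) \<or>
     (\<exists>p\<le>c. f = 10 * p + 3 \<and> ((b = 0 \<and> mem (fm_entry p r 1)) \<or> (b = 1 \<and> mem (fm_entry p r 0)))) \<or>
     (\<exists>p\<le>c. \<exists>q\<le>c. f = 10 * cpair p q + 4 \<and>
        ((b = 1 \<and> mem (fm_entry p r 1) \<and> mem (fm_entry q r 1)) \<or>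
         (b = 0 \<and> (mem (fm_entry p r 0) \<or> mem (fm_entry q r 0))))) \<or>
     (\<exists>p\<le>c. \<exists>q\<le>c. f = 10 * cpair p q + 5 \<and>
        ((b = 0 \<and> mem (fm_entry p r 0) \<and> mem (fm_entry q r 0)) \<or>
         (b = 1 \<and> (mem (fm_entry p r 1) \<or> mem (fm_entry q r 1))))) \<or>
     (\<exists>t\<le>c. \<exists>p\<le>c. f = 10 * cpair t p + 6 \<and> (\<exists>v\<le>c. mem (trm_entry t r v) \<and>
        ((b = 1 \<and> (\<exists>x<v. mem (fm_entry p (ccons x r) 1))) \<or>
         (b = 0 \<and> (\<forall>x<v. mem (fm_entry p (ccons x r) 0)))))) \<or>
     (\<exists>t\<le>c. \<exists>p\<le>c. f = 10 * cpair t p + 7 \<and> (\<exists>v\<le>c. mem (trm_entry t r v) \<and>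
        ((b = 1 \<and> (\<forall>x<v. mem (fm_entry p (ccons x r) 1))) \<or>
         (b = 0 \<and> (\<exists>x<v. mem (fm_entry p (ccons x r) 0)))))))"

definition entry_justified :: "(nat \<Rightarrow> bool) \<Rightarrow> nat \<Rightarrow> nat \<Rightarrow> bool" where
  "entry_justified mem c y =
    ((\<exists>f\<le>c. \<exists>r\<le>c. \<exists>b\<le>c. y = fm_entry f r b \<and> fm_justified mem c f r b) \<or>
     (\<exists>t\<le>c. \<exists>r\<le>c. \<exists>v\<le>c. y = trm_entry t r v \<and> trm_justified mem c t r v))"

definition justified_record :: "(nat \<Rightarrow> bool) \<Rightarrow> nat \<Rightarrow> bool" where
  "justified_record mem c \<longleftrightarrow> (\<forall>y. mem y \<longrightarrow> entry_justified mem c y)"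

lemma fm_entry_neq_trm_entry [simp]:
  "fm_entry f r b \<noteq> trm_entry t r' v" "trm_entry t r' v \<noteq> fm_entry f r b"
  unfolding fm_entry_def trm_entry_def by presburger+

lemma fm_entry_eq_iff [simp]: "fm_entry f r b = fm_entry f' r' b' \<longleftrightarrow> f = f' \<and> r = r' \<and> b = b'"
  unfolding fm_entry_def by auto

lemma trm_entry_eq_iff [simp]: "trm_entry t r v = trm_entry t' r' v' \<longleftrightarrow> t = t' \<and> r = r' \<and> v = v'"
  unfolding trm_entry_def by auto

lemma ccons_neq_0 [simp]: "ccons x r \<noteq> 0" "0 \<noteq> ccons x r"
  by (auto simp: ccons_def)

lemma ccons_eq_iff [simp]: "ccons x r = ccons x' r' \<longleftrightarrow> x = x' \<and> r = r'"
  by (auto simp: ccons_def)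

lemma justified_record_trm_entryD:
  "justified_record mem c \<Longrightarrow> mem (trm_entry t r v) \<Longrightarrow> trm_justified mem c t r v"
  unfolding justified_record_def entry_justified_def by auto

lemma justified_record_fm_entryD:
  "justified_record mem c \<Longrightarrow> mem (fm_entry f r b) \<Longrightarrow> fm_justified mem c f r b"
  unfolding justified_record_def entry_justified_def by auto

section \<open>Goedel's \<open>\<beta>\<close>-function\<close>

text \<open>A record is a finite list coded by \<open>c\<close> and \<open>d\<close> through \<open>gbeta c d j\<close>, \<open>j < len\<close>; every
  list arises in this way by the Chinese remainder theorem (\<open>gbeta_exists\<close>).\<close>

definition gbeta :: "nat \<Rightarrow> nat \<Rightarrow> nat \<Rightarrow> nat" where
  "gbeta c d j = c mod Suc (Suc j * d)"

definition in_seq :: "nat \<Rightarrow> nat \<Rightarrow> nat \<Rightarrow> nat \<Rightarrow> bool" where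
  "in_seq c d len y = (\<exists>j<len. gbeta c d j = y)"

definition good_record :: "nat \<Rightarrow> nat \<Rightarrow> nat \<Rightarrow> bool" where
  "good_record c d len = (\<forall>j<len. entry_justified (in_seq c d len) c (gbeta c d j))"

lemma good_record_iff: "good_record c d len \<longleftrightarrow> justified_record (in_seq c d len) c"
  unfolding good_record_def justified_record_def in_seq_def by auto

lemma gbeta_le: "gbeta c d j \<le> c"
  by (simp add: gbeta_def)

lemma coprime_moduli:
  assumes "i < j" "j \<le> N" "d = fact N"
  shows "coprime (Suc (Suc i * d)) (Suc (Suc j * d))"
proof (rule ccontr)
  assume "\<not> coprime (Suc (Suc i * d)) (Suc (Suc j * d))"
  then obtain g where g: "g dvd Suc (Suc i * d)" "g dvd Suc (Suc j * d)" "\<not> is_unit g"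
    by (rule not_coprimeE)
  then have "g \<noteq> 1" by auto
  then obtain p where p: "prime p" "p dvd g" using prime_factor_nat by blast
  have p1: "p dvd Suc (Suc i * d)" "p dvd Suc (Suc j * d)" using p g dvd_trans by blast+
  have ndd: "\<not> p dvd d"
  proof
    assume "p dvd d"
    then have "p dvd Suc i * d" by simp
    with p1(1) have "p dvd 1" by (metis dvd_add_right_iff plus_1_eq_Suc add.commute)
    with p(1) show False by simp
  qed
  have "Suc (Suc j * d) = Suc (Suc i * d) + (j - i) * d"
    using assms(1) by (simp add: algebra_simps diff_mult_distrib) 
  then have "p dvd (j - i) * d" using p1 by (metis dvd_add_right_iff)
  then have "p dvd (j - i)" using ndd p(1) prime_dvd_mult_iff by blast
  then have "p \<le> j - i" using assms(1) by (simp add: dvd_imp_le)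
  then have "p \<le> N" using assms by linarith
  moreover have "1 \<le> p" using p(1) prime_ge_1_nat by blast
  ultimately have "p dvd d" using assms(3) dvd_fact by blast
  with ndd show False ..
qed

lemma gbeta_exists: "\<exists>c d. \<forall>j<length L. gbeta c d j = L ! j"
proof -
  define N where "N = length L + sum_list L + 1"
  define d where "d = (fact N :: nat)"
  have "\<exists>x. \<forall>j\<in>{..<length L}. [x = L ! j] (mod Suc (Suc j * d))"
  proof (rule chinese_remainder_nat)
    show "\<forall>i\<in>{..<length L}. \<forall>j\<in>{..<length L}. i \<noteq> j \<longrightarrow> coprime (Suc (Suc i * d)) (Suc (Suc j * d))"
    proof (intro ballI impI)
      fix i j assume ij: "i \<in> {..<length L}" "j \<in> {..<length L}" "i \<noteq> j"
      show "coprime (Suc (Suc i * d)) (Suc (Suc j * d))"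
      proof (cases "i < j")
        case True then show ?thesis using coprime_moduli[of i j N d] ij by (simp add: N_def d_def)
      next
        case False then have "j < i" using ij by simp
        then show ?thesis using coprime_moduli[of j i N d] ij by (simp add: N_def d_def coprime_commute)
      qed
    qed
  qed simp
  then obtain x where x: "\<forall>j<length L. [x = L ! j] (mod Suc (Suc j * d))" by auto
  have "gbeta x d j = L ! j" if "j < length L" for j
  proof -
    have "L ! j \<le> sum_list L" using that by (metis elem_le_sum_list)
    then have "L ! j < N" by (simp add: N_def)
    also have "N \<le> d" by (simp add: d_def fact_ge_self)
    finally have "L ! j < Suc (Suc j * d)" by simp
    then show ?thesis using x that by (simp add: gbeta_def cong_def)
  qed
  then show ?thesis by blast
qed

lemma gbeta_iff: "(y < Suc (Suc j * d) \<and> (\<exists>q<Suc c. c = q * Suc (Suc j * d) + y)) \<longleftrightarrow> gbeta c d j = y"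
proof
  assume "y < Suc (Suc j * d) \<and> (\<exists>q<Suc c. c = q * Suc (Suc j * d) + y)"
  then show "gbeta c d j = y" unfolding gbeta_def by (metis add.commute mod_mult_self1 mod_less)
next
  assume h: "gbeta c d j = y"
  let ?m = "Suc (Suc j * d)"
  have "c = (c div ?m) * ?m + y" using h unfolding gbeta_def by (metis div_mult_mod_eq)
  moreover have "c div ?m < Suc c" by (simp add: le_imp_less_Suc)
  moreover have "y < ?m" using h unfolding gbeta_def by (metis mod_less_divisor zero_less_Suc)
  ultimately show "y < Suc (Suc j * d) \<and> (\<exists>q<Suc c. c = q * Suc (Suc j * d) + y)" by blast
qed

section \<open>\<open>\<Delta>\<^sub>0\<close>-definability of good records\<close>

text \<open>The \<open>\<Delta>\<^sub>0\<close> formula expressing that a coded record is good is written with named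
  variables and compiled to de Bruijn indices. Variables 0, 1, 2 are the parameters of
  \<open>refutedN\<close>; the builders bind variables from the fixed ranges 10--13, 20--28, 60--68 and
  90--91, chosen disjoint so that no bound variable captures a parameter.\<close>

datatype ntrm = NVar nat | NZero | NSc ntrm | NAdd ntrm ntrm | NMul ntrm ntrm

datatype nfm = NEq ntrm ntrm | NLt ntrm ntrm | NNeg nfm | NConj nfm nfm | NDisj nfm nfm
  | NBEx nat ntrm nfm | NBAll nat ntrm nfm

primrec evnt :: "(nat \<Rightarrow> nat) \<Rightarrow> ntrm \<Rightarrow> nat" where
  "evnt r (NVar x) = r x"
| "evnt r NZero = 0"
| "evnt r (NSc t) = Suc (evnt r t)"
| "evnt r (NAdd a b) = evnt r a + evnt r b"
| "evnt r (NMul a b) = evnt r a * evnt r b"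

primrec evnf :: "(nat \<Rightarrow> nat) \<Rightarrow> nfm \<Rightarrow> bool" where
  "evnf r (NEq a b) = (evnt r a = evnt r b)"
| "evnf r (NLt a b) = (evnt r a < evnt r b)"
| "evnf r (NNeg p) = (\<not> evnf r p)"
| "evnf r (NConj p q) = (evnf r p \<and> evnf r q)"
| "evnf r (NDisj p q) = (evnf r p \<or> evnf r q)"
| "evnf r (NBEx x t p) = (\<exists>v < evnt r t. evnf (r(x := v)) p)"
| "evnf r (NBAll x t p) = (\<forall>v < evnt r t. evnf (r(x := v)) p)"

primrec bound_pos :: "nat list \<Rightarrow> nat \<Rightarrow> nat" where
  "bound_pos [] x = 0"
| "bound_pos (y # ys) x = (if x = y then 0 else Suc (bound_pos ys x))"

primrec compile_trm :: "nat list \<Rightarrow> ntrm \<Rightarrow> trm" where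
  "compile_trm c (NVar x) = Var (if x \<in> set c then bound_pos c x else length c + x)"
| "compile_trm c NZero = Zero"
| "compile_trm c (NSc t) = Sc (compile_trm c t)"
| "compile_trm c (NAdd a b) = Pl (compile_trm c a) (compile_trm c b)"
| "compile_trm c (NMul a b) = Tm (compile_trm c a) (compile_trm c b)"

primrec compile_fm :: "nat list \<Rightarrow> nfm \<Rightarrow> fm" where
  "compile_fm c (NEq a b) = Eq (compile_trm c a) (compile_trm c b)"
| "compile_fm c (NLt a b) = Lt (compile_trm c a) (compile_trm c b)"
| "compile_fm c (NNeg p) = Neg (compile_fm c p)"
| "compile_fm c (NConj p q) = Conj (compile_fm c p) (compile_fm c q)"
| "compile_fm c (NDisj p q) = Disj (compile_fm c p) (compile_fm c q)"
| "compile_fm c (NBEx x t p) = BEx (compile_trm c t) (compile_fm (x # c) p)"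
| "compile_fm c (NBAll x t p) = BAll (compile_trm c t) (compile_fm (x # c) p)"

definition compile_env :: "nat list \<Rightarrow> (nat \<Rightarrow> nat) \<Rightarrow> nat \<Rightarrow> nat" where
  "compile_env c e y = (if y \<in> set c then e (bound_pos c y) else e (length c + y))"

lemma compile_env_Cons: "compile_env (x # c) (case_nat v e) = (compile_env c e)(x := v)"
  by (rule ext) (auto simp: compile_env_def)

lemma compile_env_Nil [simp]: "compile_env [] e = e"
  by (rule ext) (simp add: compile_env_def)

lemma evt_compile_trm: "evt e (compile_trm c t) = evnt (compile_env c e) t"
  by (induction t) (auto simp: compile_env_def)

lemma evf_compile_fm: "evf e X (compile_fm c p) = evnf (compile_env c e) p"
  by (induction p arbitrary: c e) (auto simp: evt_compile_trm compile_env_Cons)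

lemma evf_compile_fm_Nil: "evf e X (compile_fm [] p) = evnf e p"
  by (simp add: evf_compile_fm)

lemma delta0_compile_fm: "delta0 (compile_fm c p)"
  by (induction p arbitrary: c) auto

primrec nnum :: "nat \<Rightarrow> ntrm" where
  "nnum 0 = NZero"
| "nnum (Suc k) = NSc (nnum k)"

lemma evnt_nnum [simp]: "evnt r (nnum k) = k"
  by (induction k) auto

primrec vars_ntrm :: "ntrm \<Rightarrow> nat set" where
  "vars_ntrm (NVar x) = {x}"
| "vars_ntrm NZero = {}"
| "vars_ntrm (NSc t) = vars_ntrm t"
| "vars_ntrm (NAdd a b) = vars_ntrm a \<union> vars_ntrm b"
| "vars_ntrm (NMul a b) = vars_ntrm a \<union> vars_ntrm b"

lemma evnt_upd [simp]: "x \<notin> vars_ntrm t \<Longrightarrow> evnt (r(x := v)) t = evnt r t"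
  by (induction t) auto

lemma vars_nnum [simp]: "vars_ntrm (nnum k) = {}"
  by (induction k) auto

definition cpairN :: "ntrm \<Rightarrow> ntrm \<Rightarrow> ntrm" where
  "cpairN a b = NAdd (NMul (NAdd a b) (NAdd a b)) a"

definition cconsN :: "ntrm \<Rightarrow> ntrm \<Rightarrow> ntrm" where
  "cconsN x r = NSc (cpairN x r)"

definition fm_entryN :: "ntrm \<Rightarrow> ntrm \<Rightarrow> ntrm \<Rightarrow> ntrm" where
  "fm_entryN f r b = NMul (nnum 2) (cpairN (cpairN f r) b)"

definition trm_entryN :: "ntrm \<Rightarrow> ntrm \<Rightarrow> ntrm \<Rightarrow> ntrm" where
  "trm_entryN t r v = NSc (NMul (nnum 2) (cpairN (cpairN t r) v))"

lemma evnt_cpairN [simp]: "evnt r (cpairN a b) = cpair (evnt r a) (evnt r b)"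
  by (simp add: cpairN_def cpair_def)

lemma evnt_cconsN [simp]: "evnt r (cconsN a b) = ccons (evnt r a) (evnt r b)"
  by (simp add: cconsN_def ccons_def)

lemma evnt_fm_entryN [simp]: "evnt r (fm_entryN a b c) = fm_entry (evnt r a) (evnt r b) (evnt r c)"
  by (simp add: fm_entryN_def fm_entry_def)

lemma evnt_trm_entryN [simp]: "evnt r (trm_entryN a b c) = trm_entry (evnt r a) (evnt r b) (evnt r c)"
  by (simp add: trm_entryN_def trm_entry_def)

lemma vars_cpairN [simp]: "vars_ntrm (cpairN a b) = vars_ntrm a \<union> vars_ntrm b"
  by (auto simp: cpairN_def)

lemma vars_cconsN [simp]: "vars_ntrm (cconsN a b) = vars_ntrm a \<union> vars_ntrm b"
  by (auto simp: cconsN_def)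

lemma vars_fm_entryN [simp]: "vars_ntrm (fm_entryN a b c) = vars_ntrm a \<union> vars_ntrm b \<union> vars_ntrm c"
  by (auto simp: fm_entryN_def)

lemma vars_trm_entryN [simp]: "vars_ntrm (trm_entryN a b c) = vars_ntrm a \<union> vars_ntrm b \<union> vars_ntrm c"
  by (auto simp: trm_entryN_def)

definition gbeta_eqN :: "nat \<Rightarrow> nat \<Rightarrow> nat \<Rightarrow> nat \<Rightarrow> ntrm \<Rightarrow> nfm" where
  "gbeta_eqN q c d j y = NConj (NLt y (NSc (NMul (NSc (NVar j)) (NVar d))))
      (NBEx q (NSc (NVar c)) (NEq (NVar c) (NAdd (NMul (NVar q) (NSc (NMul (NSc (NVar j)) (NVar d)))) y)))"

definition in_seqN :: "nat \<Rightarrow> nat \<Rightarrow> nat \<Rightarrow> ntrm \<Rightarrow> nfm" where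
  "in_seqN c d len y = NBEx 90 (NVar len) (gbeta_eqN 91 c d 90 y)"

lemma evnf_in_seqN [simp]:
  assumes "c < 90" "d < 90" "\<forall>x\<in>vars_ntrm y. x < 90"
  shows "evnf r (in_seqN c d len y) = in_seq (r c) (r d) (r len) (evnt r y)"
proof -
  from assms have "90 \<notin> vars_ntrm y" "91 \<notin> vars_ntrm y" by auto
  with assms show ?thesis unfolding in_seqN_def gbeta_eqN_def in_seq_def
    by (simp add: gbeta_iff[symmetric] del: less_Suc_eq_le)
qed

definition var_justifiedN :: "nat \<Rightarrow> nat \<Rightarrow> nat \<Rightarrow> nat \<Rightarrow> nat \<Rightarrow> nat \<Rightarrow> nfm" where
  "var_justifiedN c d len t r v =
    NBEx 60 (NSc (NVar c)) (NConj (NEq (NVar t) (NMul (nnum 5) (NVar 60)))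
      (NDisj (NConj (NEq (NVar r) NZero) (NEq (NVar v) NZero))
        (NBEx 61 (NSc (NVar c)) (NBEx 62 (NSc (NVar c))
          (NConj (NEq (NVar r) (cconsN (NVar 61) (NVar 62)))
            (NDisj (NConj (NEq (NVar 60) NZero) (NEq (NVar v) (NVar 61)))
              (NBEx 63 (NSc (NVar c)) (NConj (NEq (NVar 60) (NSc (NVar 63)))
                (in_seqN c d len (trm_entryN (NMul (nnum 5) (NVar 63)) (NVar 62) (NVar v)))))))))))"

definition sc_justifiedN :: "nat \<Rightarrow> nat \<Rightarrow> nat \<Rightarrow> nat \<Rightarrow> nat \<Rightarrow> nat \<Rightarrow> nfm" where
  "sc_justifiedN c d len t r v =
    NBEx 64 (NSc (NVar c)) (NConj (NEq (NVar t) (NAdd (NMul (nnum 5) (NVar 64)) (nnum 2)))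
      (NBEx 65 (NSc (NVar c)) (NConj (NEq (NVar v) (NSc (NVar 65)))
        (in_seqN c d len (trm_entryN (NVar 64) (NVar r) (NVar 65))))))"

definition op_justifiedN :: "bool \<Rightarrow> nat \<Rightarrow> nat \<Rightarrow> nat \<Rightarrow> nat \<Rightarrow> nat \<Rightarrow> nat \<Rightarrow> nfm" where
  "op_justifiedN m c d len t r v =
    NBEx 66 (NSc (NVar c)) (NBEx 64 (NSc (NVar c))
      (NConj (NEq (NVar t) (NAdd (NMul (nnum 5) (cpairN (NVar 66) (NVar 64))) (nnum (if m then 4 else 3))))
        (NBEx 67 (NSc (NVar c)) (NBEx 68 (NSc (NVar c))
          (NConj (NEq (NVar v) (if m then NMul (NVar 67) (NVar 68) else NAdd (NVar 67) (NVar 68)))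
            (NConj (in_seqN c d len (trm_entryN (NVar 66) (NVar r) (NVar 67)))
              (in_seqN c d len (trm_entryN (NVar 64) (NVar r) (NVar 68)))))))))"

definition trm_justifiedN :: "nat \<Rightarrow> nat \<Rightarrow> nat \<Rightarrow> nat \<Rightarrow> nat \<Rightarrow> nat \<Rightarrow> nfm" where
  "trm_justifiedN c d len t r v =
    NDisj (var_justifiedN c d len t r v)
      (NDisj (NConj (NEq (NVar t) (NSc NZero)) (NEq (NVar v) NZero))
        (NDisj (sc_justifiedN c d len t r v)
          (NDisj (op_justifiedN False c d len t r v) (op_justifiedN True c d len t r v))))"

lemma evnf_trm_justifiedN:
  "evnf r (trm_justifiedN 11 12 13 25 26 27) =
    trm_justified (in_seq (r 11) (r 12) (r 13)) (r 11) (r 25) (r 26) (r 27)"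
  unfolding trm_justifiedN_def trm_justified_def var_justifiedN_def sc_justifiedN_def op_justifiedN_def
  by (simp del: less_Suc_eq_le add: less_Suc_eq_le[symmetric])

definition rel_justifiedN :: "nat \<Rightarrow> nfm \<Rightarrow> nat \<Rightarrow> nat \<Rightarrow> nat \<Rightarrow> nat \<Rightarrow> nat \<Rightarrow> nat \<Rightarrow> nfm" where
  "rel_justifiedN k rel c d len f r b =
    NBEx 60 (NSc (NVar c)) (NBEx 61 (NSc (NVar c))
      (NConj (NEq (NVar f) (NAdd (NMul (nnum 10) (cpairN (NVar 60) (NVar 61))) (nnum k)))
        (NBEx 62 (NSc (NVar c)) (NBEx 63 (NSc (NVar c))
          (NConj (in_seqN c d len (trm_entryN (NVar 60) (NVar r) (NVar 62)))
            (NConj (in_seqN c d len (trm_entryN (NVar 61) (NVar r) (NVar 63)))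
              (NDisj (NConj (NEq (NVar b) (nnum 1)) rel)
                (NConj (NNeg (NEq (NVar b) (nnum 1))) (NNeg rel)))))))))"

definition mem_justifiedN :: "nat \<Rightarrow> nat \<Rightarrow> nat \<Rightarrow> nat \<Rightarrow> nat \<Rightarrow> nat \<Rightarrow> nfm" where
  "mem_justifiedN c d len f r b =
    NBEx 64 (NSc (NVar c)) (NBEx 61 (NSc (NVar c))
      (NConj (NEq (NVar f) (NAdd (NMul (nnum 10) (cpairN (NVar 64) (NVar 61))) (nnum 2))) (NEq (NVar b) NZero)))"

definition neg_justifiedN :: "nat \<Rightarrow> nat \<Rightarrow> nat \<Rightarrow> nat \<Rightarrow> nat \<Rightarrow> nat \<Rightarrow> nfm" where
  "neg_justifiedN c d len f r b =
    NBEx 65 (NSc (NVar c)) (NConj (NEq (NVar f) (NAdd (NMul (nnum 10) (NVar 65)) (nnum 3)))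
      (NDisj (NConj (NEq (NVar b) NZero) (in_seqN c d len (fm_entryN (NVar 65) (NVar r) (nnum 1))))
        (NConj (NEq (NVar b) (nnum 1)) (in_seqN c d len (fm_entryN (NVar 65) (NVar r) NZero)))))"

definition conn_justifiedN :: "nat \<Rightarrow> nat \<Rightarrow> nat \<Rightarrow> nat \<Rightarrow> nat \<Rightarrow> nat \<Rightarrow> nat \<Rightarrow> nat \<Rightarrow> nat \<Rightarrow> nfm" where
  "conn_justifiedN k a ov c d len f r b =
    NBEx 65 (NSc (NVar c)) (NBEx 66 (NSc (NVar c))
      (NConj (NEq (NVar f) (NAdd (NMul (nnum 10) (cpairN (NVar 65) (NVar 66))) (nnum k)))
        (NDisj (NConj (NEq (NVar b) (nnum a))
            (NConj (in_seqN c d len (fm_entryN (NVar 65) (NVar r) (nnum a)))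
              (in_seqN c d len (fm_entryN (NVar 66) (NVar r) (nnum a)))))
          (NConj (NEq (NVar b) (nnum ov))
            (NDisj (in_seqN c d len (fm_entryN (NVar 65) (NVar r) (nnum ov)))
              (in_seqN c d len (fm_entryN (NVar 66) (NVar r) (nnum ov))))))))"

definition bquant_justifiedN :: "nat \<Rightarrow> bool \<Rightarrow> nat \<Rightarrow> nat \<Rightarrow> nat \<Rightarrow> nat \<Rightarrow> nat \<Rightarrow> nat \<Rightarrow> nfm" where
  "bquant_justifiedN k ex c d len f r b =
    NBEx 61 (NSc (NVar c)) (NBEx 65 (NSc (NVar c))
      (NConj (NEq (NVar f) (NAdd (NMul (nnum 10) (cpairN (NVar 61) (NVar 65))) (nnum k)))
        (NBEx 67 (NSc (NVar c)) (NConj (in_seqN c d len (trm_entryN (NVar 61) (NVar r) (NVar 67)))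
          (NDisj (NConj (NEq (NVar b) (nnum 1)) ((if ex then NBEx else NBAll) 68 (NVar 67)
                (in_seqN c d len (fm_entryN (NVar 65) (cconsN (NVar 68) (NVar r)) (nnum 1)))))
            (NConj (NEq (NVar b) NZero) ((if ex then NBAll else NBEx) 68 (NVar 67)
                (in_seqN c d len (fm_entryN (NVar 65) (cconsN (NVar 68) (NVar r)) NZero)))))))))"

definition fm_justifiedN :: "nat \<Rightarrow> nat \<Rightarrow> nat \<Rightarrow> nat \<Rightarrow> nat \<Rightarrow> nat \<Rightarrow> nfm" where
  "fm_justifiedN c d len f r b =
    NDisj (rel_justifiedN 0 (NEq (NVar 62) (NVar 63)) c d len f r b)
      (NDisj (rel_justifiedN 1 (NLt (NVar 62) (NVar 63)) c d len f r b)
        (NDisj (mem_justifiedN c d len f r b)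
          (NDisj (neg_justifiedN c d len f r b)
            (NDisj (conn_justifiedN 4 1 0 c d len f r b)
              (NDisj (conn_justifiedN 5 0 1 c d len f r b)
                (NDisj (bquant_justifiedN 6 True c d len f r b) (bquant_justifiedN 7 False c d len f r b)))))))"

lemma evnf_fm_justifiedN:
  "evnf r (fm_justifiedN 11 12 13 22 23 24) =
    fm_justified (in_seq (r 11) (r 12) (r 13)) (r 11) (r 22) (r 23) (r 24)"
  unfolding fm_justifiedN_def fm_justified_def rel_justifiedN_def mem_justifiedN_def neg_justifiedN_def
    conn_justifiedN_def bquant_justifiedN_def
  by (simp del: less_Suc_eq_le add: less_Suc_eq_le[symmetric])

definition entry_justifiedN :: "nat \<Rightarrow> nat \<Rightarrow> nat \<Rightarrow> nat \<Rightarrow> nfm" where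
  "entry_justifiedN c d len y =
    NDisj (NBEx 22 (NSc (NVar c)) (NBEx 23 (NSc (NVar c)) (NBEx 24 (NSc (NVar c))
        (NConj (NEq (NVar y) (fm_entryN (NVar 22) (NVar 23) (NVar 24))) (fm_justifiedN c d len 22 23 24)))))
      (NBEx 25 (NSc (NVar c)) (NBEx 26 (NSc (NVar c)) (NBEx 27 (NSc (NVar c))
        (NConj (NEq (NVar y) (trm_entryN (NVar 25) (NVar 26) (NVar 27))) (trm_justifiedN c d len 25 26 27)))))"

definition good_recordN :: "nat \<Rightarrow> nat \<Rightarrow> nat \<Rightarrow> nfm" where
  "good_recordN c d len =
    NBAll 20 (NVar len) (NBAll 21 (NSc (NVar c))
      (NDisj (NNeg (gbeta_eqN 28 c d 20 (NVar 21))) (entry_justifiedN c d len 21)))"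

lemma evnf_good_recordN: "evnf r (good_recordN 11 12 13) = good_record (r 11) (r 12) (r 13)"
proof -
  have "evnf r (good_recordN 11 12 13) = (\<forall>j<r 13. \<forall>y\<le>r 11.
      gbeta (r 11) (r 12) j = y \<longrightarrow> entry_justified (in_seq (r 11) (r 12) (r 13)) (r 11) y)"
    unfolding good_recordN_def entry_justifiedN_def gbeta_eqN_def entry_justified_def
    by (simp del: less_Suc_eq_le add: less_Suc_eq_le[symmetric] evnf_fm_justifiedN
        evnf_trm_justifiedN gbeta_iff[symmetric]) blast
  then show ?thesis unfolding good_record_def using gbeta_le by auto
qed

definition refutedN :: nfm where
  "refutedN =
    NBEx 10 (NSc (NVar 0)) (NBEx 11 (NSc (NVar 0)) (NBEx 12 (NSc (NVar 0)) (NBEx 13 (NSc (NVar 0))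
      (NConj (good_recordN 11 12 13)
        (in_seqN 11 12 13 (fm_entryN (NVar 1) (cconsN (NVar 10) (NVar 2)) NZero))))))"

definition refuted_below :: "nat \<Rightarrow> nat \<Rightarrow> nat \<Rightarrow> bool" where
  "refuted_below z D R = (\<exists>x\<le>z. \<exists>c\<le>z. \<exists>d\<le>z. \<exists>len\<le>z.
     good_record c d len \<and> in_seq c d len (fm_entry D (ccons x R) 0))"

lemma evnf_refutedN: "evnf r refutedN = refuted_below (r 0) (r 1) (r 2)"
  unfolding refutedN_def refuted_below_def
  by (simp del: less_Suc_eq_le add: less_Suc_eq_le[symmetric] evnf_good_recordN)

section \<open>Soundness of justified records\<close>

text \<open>Codes of different constructors differ modulo 5 (terms) or 10 (formulas), so exactly
  one clause of \<open>trm_justified\<close> or \<open>fm_justified\<close> applies to a given code.\<close>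

lemma trm_justified_VarE:
  "trm_justified mem c (5 * i) r v \<Longrightarrow> (r = 0 \<and> v = 0) \<or>
     (\<exists>x r'. r = ccons x r' \<and> ((i = 0 \<and> v = x) \<or> (\<exists>i'. i = Suc i' \<and> mem (trm_entry (5 * i') r' v))))"
  unfolding trm_justified_def by (elim disjE; (elim exE conjE)?; auto; presburger)

lemma trm_justified_ZeroE: "trm_justified mem c 1 r v \<Longrightarrow> v = 0"
  unfolding trm_justified_def by (elim disjE; (elim exE conjE)?; auto; presburger)

lemma trm_justified_ScE:
  "trm_justified mem c (5 * t + 2) r v \<Longrightarrow> \<exists>v'. v = Suc v' \<and> mem (trm_entry t r v')"
  unfolding trm_justified_def by (elim disjE; (elim exE conjE)?; auto; presburger)

lemma trm_justified_PlE:
  "trm_justified mem c (5 * cpair s t + 3) r v \<Longrightarrow>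
     \<exists>v1 v2. v = v1 + v2 \<and> mem (trm_entry s r v1) \<and> mem (trm_entry t r v2)"
  unfolding trm_justified_def by (elim disjE; (elim exE conjE)?; auto; presburger)

lemma trm_justified_TmE:
  "trm_justified mem c (5 * cpair s t + 4) r v \<Longrightarrow>
     \<exists>v1 v2. v = v1 * v2 \<and> mem (trm_entry s r v1) \<and> mem (trm_entry t r v2)"
  unfolding trm_justified_def by (elim disjE; (elim exE conjE)?; auto; presburger)

lemma fm_justified_EqE:
  "fm_justified mem c (10 * cpair s t) r b \<Longrightarrow>
     \<exists>v1 v2. mem (trm_entry s r v1) \<and> mem (trm_entry t r v2) \<and> (b = 1 \<longleftrightarrow> v1 = v2)"
  unfolding fm_justified_def by (elim disjE; (elim exE conjE)?; auto; presburger)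

lemma fm_justified_LtE:
  "fm_justified mem c (10 * cpair s t + 1) r b \<Longrightarrow>
     \<exists>v1 v2. mem (trm_entry s r v1) \<and> mem (trm_entry t r v2) \<and> (b = 1 \<longleftrightarrow> v1 < v2)"
  unfolding fm_justified_def by (elim disjE; (elim exE conjE)?; auto; presburger)

lemma fm_justified_MemE: "fm_justified mem c (10 * cpair i t + 2) r b \<Longrightarrow> b = 0"
  unfolding fm_justified_def by (elim disjE; (elim exE conjE)?; auto; presburger)

lemma fm_justified_NegE:
  "fm_justified mem c (10 * p + 3) r b \<Longrightarrow>
     (b = 0 \<and> mem (fm_entry p r 1)) \<or> (b = 1 \<and> mem (fm_entry p r 0))"
  unfolding fm_justified_def by (elim disjE; (elim exE conjE)?; auto; presburger)

lemma fm_justified_ConjE: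
  "fm_justified mem c (10 * cpair p q + 4) r b \<Longrightarrow>
     (b = 1 \<and> mem (fm_entry p r 1) \<and> mem (fm_entry q r 1)) \<or>
     (b = 0 \<and> (mem (fm_entry p r 0) \<or> mem (fm_entry q r 0)))"
  unfolding fm_justified_def by (elim disjE; (elim exE conjE)?; auto; presburger)

lemma fm_justified_DisjE:
  "fm_justified mem c (10 * cpair p q + 5) r b \<Longrightarrow>
     (b = 0 \<and> mem (fm_entry p r 0) \<and> mem (fm_entry q r 0)) \<or>
     (b = 1 \<and> (mem (fm_entry p r 1) \<or> mem (fm_entry q r 1)))"
  unfolding fm_justified_def by (elim disjE; (elim exE conjE)?; auto; presburger)

lemma fm_justified_BExE:
  "fm_justified mem c (10 * cpair t p + 6) r b \<Longrightarrow> \<exists>v. mem (trm_entry t r v) \<and>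
     ((b = 1 \<and> (\<exists>x<v. mem (fm_entry p (ccons x r) 1))) \<or>
      (b = 0 \<and> (\<forall>x<v. mem (fm_entry p (ccons x r) 0))))"
  unfolding fm_justified_def by (elim disjE; (elim exE conjE)?; auto; presburger)

lemma fm_justified_BAllE:
  "fm_justified mem c (10 * cpair t p + 7) r b \<Longrightarrow> \<exists>v. mem (trm_entry t r v) \<and>
     ((b = 1 \<and> (\<forall>x<v. mem (fm_entry p (ccons x r) 1))) \<or>
      (b = 0 \<and> (\<exists>x<v. mem (fm_entry p (ccons x r) 0))))"
  unfolding fm_justified_def by (elim disjE; (elim exE conjE)?; auto; presburger)

lemma fm_justified_ExE: "fm_justified mem c (10 * p + 8) r b \<Longrightarrow> False"
  unfolding fm_justified_def by (elim disjE; (elim exE conjE)?; auto; presburger)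

lemma fm_justified_AllE: "fm_justified mem c (10 * p + 9) r b \<Longrightarrow> False"
  unfolding fm_justified_def by (elim disjE; (elim exE conjE)?; auto; presburger)

lemma var_entry_sound:
  assumes "justified_record mem c" "mem (trm_entry (5 * i) (code_list xs) v)"
  shows "list_env xs i = v"
  using assms(2)
proof (induction i arbitrary: xs v)
  case 0
  from trm_justified_VarE[OF justified_record_trm_entryD[OF assms(1) 0]] show ?case
    by (cases xs) (simp_all add: list_env_def)
next
  case (Suc i)
  from trm_justified_VarE[OF justified_record_trm_entryD[OF assms(1) Suc.prems]]
  consider "xs = []" "v = 0" | y ys where "xs = y # ys" "mem (trm_entry (5 * i) (code_list ys) v)"
    by (cases xs) auto
  then show ?case
  proof cases
    case (2 y ys)
    then show ?thesis using Suc.IH[of ys v] by (simp add: list_env_def split: if_splits)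
  qed (simp add: list_env_def)
qed

lemma trm_entry_sound:
  assumes "justified_record mem c" "mem (trm_entry (code_trm t) (code_list xs) v)"
  shows "evt (list_env xs) t = v"
proof -
  note just = justified_record_trm_entryD[OF assms(1)]
  show ?thesis
    using assms(2)
  proof (induction t arbitrary: v)
    case (Var i)
    then show ?case using var_entry_sound[OF assms(1)] by simp
  next
    case Zero
    from trm_justified_ZeroE[OF just[OF Zero[unfolded code_trm.simps]]] show ?case
      by simp
  next
    case (Sc t)
    from trm_justified_ScE[OF just[OF Sc.prems[unfolded code_trm.simps]]] Sc.IH
    show ?case by auto
  next
    case (Pl s t)
    from trm_justified_PlE[OF just[OF Pl.prems[unfolded code_trm.simps]]] Pl.IH
    show ?case by auto
  next
    case (Tm s t)
    from trm_justified_TmE[OF just[OF Tm.prems[unfolded code_trm.simps]]] Tm.IH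
    show ?case by auto
  qed
qed

abbreviation no_sets :: "nat \<Rightarrow> nat \<Rightarrow> bool" where
  "no_sets \<equiv> \<lambda>_ _. False"

lemma fm_entry_sound:
  assumes "justified_record mem c" "mem (fm_entry (code_fm p) (code_list xs) b)"
  shows "evf (list_env xs) no_sets p \<longleftrightarrow> b = 1"
proof -
  note just = justified_record_fm_entryD[OF assms(1)]
  show ?thesis
    using assms(2)
  proof (induction p arbitrary: xs b)
    case (Eq s t)
    from fm_justified_EqE[OF just[OF Eq[unfolded code_fm.simps]]]
    show ?case using trm_entry_sound[OF assms(1)] by auto
  next
    case (Lt s t)
    from fm_justified_LtE[OF just[OF Lt[unfolded code_fm.simps]]]
    show ?case using trm_entry_sound[OF assms(1)] by auto
  next
    case (Mem i t)
    from fm_justified_MemE[OF just[OF Mem[unfolded code_fm.simps]]]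
    show ?case by simp
  next
    case (Neg p)
    from fm_justified_NegE[OF just[OF Neg.prems[unfolded code_fm.simps]]]
    show ?case using Neg.IH by auto
  next
    case (Conj p q)
    from fm_justified_ConjE[OF just[OF Conj.prems[unfolded code_fm.simps]]]
    show ?case using Conj.IH by auto
  next
    case (Disj p q)
    from fm_justified_DisjE[OF just[OF Disj.prems[unfolded code_fm.simps]]]
    show ?case using Disj.IH by auto
  next
    case (BEx t p)
    from fm_justified_BExE[OF just[OF BEx.prems[unfolded code_fm.simps]]]
    obtain v where v: "mem (trm_entry (code_trm t) (code_list xs) v)"
      and b: "(b = 1 \<and> (\<exists>x<v. mem (fm_entry (code_fm p) (code_list (x # xs)) 1))) \<or>
              (b = 0 \<and> (\<forall>x<v. mem (fm_entry (code_fm p) (code_list (x # xs)) 0)))"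
      by auto
    have "evt (list_env xs) t = v" using trm_entry_sound[OF assms(1) v] .
    moreover have "mem (fm_entry (code_fm p) (ccons x (code_list xs)) b') \<Longrightarrow>
        evf (case_nat x (list_env xs)) no_sets p \<longleftrightarrow> b' = 1" for x b'
      using BEx.IH[of "x # xs" b'] by (simp add: list_env_Cons)
    ultimately show ?case using b by auto
  next
    case (BAll t p)
    from fm_justified_BAllE[OF just[OF BAll.prems[unfolded code_fm.simps]]]
    obtain v where v: "mem (trm_entry (code_trm t) (code_list xs) v)"
      and b: "(b = 1 \<and> (\<forall>x<v. mem (fm_entry (code_fm p) (code_list (x # xs)) 1))) \<or>
              (b = 0 \<and> (\<exists>x<v. mem (fm_entry (code_fm p) (code_list (x # xs)) 0)))"
      by auto
    have "evt (list_env xs) t = v" using trm_entry_sound[OF assms(1) v] .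
    moreover have "mem (fm_entry (code_fm p) (ccons x (code_list xs)) b') \<Longrightarrow>
        evf (case_nat x (list_env xs)) no_sets p \<longleftrightarrow> b' = 1" for x b'
      using BAll.IH[of "x # xs" b'] by (simp add: list_env_Cons)
    ultimately show ?case using b by auto
  next
    case (Ex p)
    from fm_justified_ExE[OF just[OF Ex.prems[unfolded code_fm.simps]]]
    show ?case ..
  next
    case (All p)
    from fm_justified_AllE[OF just[OF All.prems[unfolded code_fm.simps]]]
    show ?case ..
  qed
qed

section \<open>Completeness of justified records\<close>

lemma trm_entry_ge: "t \<le> trm_entry t r v" "r \<le> trm_entry t r v" "v \<le> trm_entry t r v"
  unfolding trm_entry_def using cpair_ge1 cpair_ge2 le_trans by (metis le_SucI mult_2 trans_le_add1)+

lemma fm_entry_ge: "f \<le> fm_entry f r b" "r \<le> fm_entry f r b" "b \<le> fm_entry f r b"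
  unfolding fm_entry_def using cpair_ge1 cpair_ge2 le_trans by (metis mult_2 trans_le_add1)+

lemma ccons_ge: "x \<le> ccons x r" "r \<le> ccons x r"
  unfolding ccons_def using cpair_ge1 cpair_ge2 le_SucI by blast+

lemma trm_entry_le: "trm_entry t r v \<le> c \<Longrightarrow> t \<le> c \<and> r \<le> c \<and> v \<le> c"
  using trm_entry_ge[where t=t and r=r and v=v] by linarith

lemma fm_entry_le: "fm_entry f r b \<le> c \<Longrightarrow> f \<le> c \<and> r \<le> c \<and> b \<le> c"
  using fm_entry_ge[where f=f and r=r and b=b] by linarith

lemma cpair_le: "cpair a b \<le> c \<Longrightarrow> a \<le> c \<and> b \<le> c"
  using cpair_ge1[where a=a and b=b] cpair_ge2[where a=a and b=b] by linarith

lemma ccons_le: "ccons a b \<le> c \<Longrightarrow> a \<le> c \<and> b \<le> c"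
  using ccons_ge[where x=a and r=b] by linarith

lemma entry_justified_trm_entryI:
  "trm_entry t r v \<le> c \<Longrightarrow> trm_justified mem c t r v \<Longrightarrow> entry_justified mem c (trm_entry t r v)"
  unfolding entry_justified_def by (drule trm_entry_le) blast

lemma entry_justified_fm_entryI:
  "fm_entry f r b \<le> c \<Longrightarrow> fm_justified mem c f r b \<Longrightarrow> entry_justified mem c (fm_entry f r b)"
  unfolding entry_justified_def by (drule fm_entry_le) blast

lemma trm_justified_Var_Nil: "i \<le> c \<Longrightarrow> trm_justified mem c (5*i) 0 0"
  unfolding trm_justified_def by auto

lemma trm_justified_Var_0: "x \<le> c \<Longrightarrow> r \<le> c \<Longrightarrow> trm_justified mem c 0 (ccons x r) x"
  unfolding trm_justified_def by auto

lemma trm_justified_Var_Suc: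
  "Suc i \<le> c \<Longrightarrow> x \<le> c \<Longrightarrow> r \<le> c \<Longrightarrow> mem (trm_entry (5*i) r v) \<Longrightarrow>
    trm_justified mem c (5 * Suc i) (ccons x r) v"
  unfolding trm_justified_def by (intro disjI1 bexI[of _ "Suc i"]) auto

lemma trm_justified_Zero: "trm_justified mem c 1 r 0"
  unfolding trm_justified_def by auto

lemma trm_justified_Sc:
  "t \<le> c \<Longrightarrow> v \<le> c \<Longrightarrow> mem (trm_entry t r v) \<Longrightarrow> trm_justified mem c (5*t+2) r (Suc v)"
  unfolding trm_justified_def by auto

lemma trm_justified_Pl:
  "s \<le> c \<Longrightarrow> t \<le> c \<Longrightarrow> v1 \<le> c \<Longrightarrow> v2 \<le> c \<Longrightarrow> mem (trm_entry s r v1) \<Longrightarrow>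
    mem (trm_entry t r v2) \<Longrightarrow> trm_justified mem c (5*cpair s t+3) r (v1+v2)"
  unfolding trm_justified_def by blast

lemma trm_justified_Tm:
  "s \<le> c \<Longrightarrow> t \<le> c \<Longrightarrow> v1 \<le> c \<Longrightarrow> v2 \<le> c \<Longrightarrow> mem (trm_entry s r v1) \<Longrightarrow>
    mem (trm_entry t r v2) \<Longrightarrow> trm_justified mem c (5*cpair s t+4) r (v1*v2)"
  unfolding trm_justified_def by blast

lemma fm_justified_Eq:
  "s \<le> c \<Longrightarrow> t \<le> c \<Longrightarrow> v1 \<le> c \<Longrightarrow> v2 \<le> c \<Longrightarrow> mem (trm_entry s r v1) \<Longrightarrow>
    mem (trm_entry t r v2) \<Longrightarrow> fm_justified mem c (10*cpair s t) r (of_bool (v1 = v2))"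
  unfolding fm_justified_def by (intro disjI1) auto

lemma fm_justified_Lt:
  "s \<le> c \<Longrightarrow> t \<le> c \<Longrightarrow> v1 \<le> c \<Longrightarrow> v2 \<le> c \<Longrightarrow> mem (trm_entry s r v1) \<Longrightarrow>
    mem (trm_entry t r v2) \<Longrightarrow> fm_justified mem c (10*cpair s t+1) r (of_bool (v1 < v2))"
  unfolding fm_justified_def by (intro disjI2 disjI1) auto

lemma fm_justified_Mem: "i \<le> c \<Longrightarrow> t \<le> c \<Longrightarrow> fm_justified mem c (10*cpair i t+2) r 0"
  unfolding fm_justified_def by (intro disjI2 disjI1) auto

lemma fm_justified_Neg:
  "p \<le> c \<Longrightarrow> mem (fm_entry p r (of_bool B)) \<Longrightarrow> fm_justified mem c (10*p+3) r (of_bool (\<not> B))"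
  unfolding fm_justified_def by (intro disjI2 disjI1) auto

lemma fm_justified_Conj:
  "p \<le> c \<Longrightarrow> q \<le> c \<Longrightarrow> mem (fm_entry p r (of_bool B1)) \<Longrightarrow> mem (fm_entry q r (of_bool B2)) \<Longrightarrow>
    fm_justified mem c (10*cpair p q+4) r (of_bool (B1 \<and> B2))"
  unfolding fm_justified_def by (intro disjI2 disjI1) auto

lemma fm_justified_Disj:
  "p \<le> c \<Longrightarrow> q \<le> c \<Longrightarrow> mem (fm_entry p r (of_bool B1)) \<Longrightarrow> mem (fm_entry q r (of_bool B2)) \<Longrightarrow>
    fm_justified mem c (10*cpair p q+5) r (of_bool (B1 \<or> B2))"
  unfolding fm_justified_def by (intro disjI2 disjI1) auto

lemma fm_justified_BEx:
  assumes "t \<le> c" "p \<le> c" "v \<le> c" "mem (trm_entry t r v)"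
    and "\<forall>x<v. mem (fm_entry p (ccons x r) (of_bool (B x)))"
  shows "fm_justified mem c (10*cpair t p+6) r (of_bool (\<exists>x<v. B x))"
proof -
  have "(of_bool (\<exists>x<v. B x) = (1::nat) \<and> (\<exists>x<v. mem (fm_entry p (ccons x r) 1))) \<or>
        (of_bool (\<exists>x<v. B x) = (0::nat) \<and> (\<forall>x<v. mem (fm_entry p (ccons x r) 0)))"
  proof (cases "\<exists>x<v. B x")
    case True
    then obtain x where x: "x < v" "B x" by blast
    then have "mem (fm_entry p (ccons x r) 1)" using assms(5) by force
    then show ?thesis using x True by auto
  next
    case False
    then show ?thesis using assms(5) by auto
  qed
  then show ?thesis unfolding fm_justified_def using assms(1-4) by blast
qed

lemma fm_justified_BAll:
  assumes "t \<le> c" "p \<le> c" "v \<le> c" "mem (trm_entry t r v)"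
    and "\<forall>x<v. mem (fm_entry p (ccons x r) (of_bool (B x)))"
  shows "fm_justified mem c (10*cpair t p+7) r (of_bool (\<forall>x<v. B x))"
proof -
  have "(of_bool (\<forall>x<v. B x) = (1::nat) \<and> (\<forall>x<v. mem (fm_entry p (ccons x r) 1))) \<or>
        (of_bool (\<forall>x<v. B x) = (0::nat) \<and> (\<exists>x<v. mem (fm_entry p (ccons x r) 0)))"
  proof (cases "\<forall>x<v. B x")
    case False
    then obtain x where x: "x < v" "\<not> B x" by blast
    then have "mem (fm_entry p (ccons x r) 0)" using assms(5) by force
    then show ?thesis using x False by auto
  next
    case True
    then show ?thesis using assms(5) by auto
  qed
  then show ?thesis unfolding fm_justified_def using assms(1-4) by blast
qed

definition trm_fact :: "trm \<Rightarrow> nat list \<Rightarrow> nat" where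
  "trm_fact t xs = trm_entry (code_trm t) (code_list xs) (evt (list_env xs) t)"

definition fm_fact :: "fm \<Rightarrow> nat list \<Rightarrow> nat" where
  "fm_fact p xs = fm_entry (code_fm p) (code_list xs) (of_bool (evf (list_env xs) no_sets p))"

fun var_record :: "nat \<Rightarrow> nat list \<Rightarrow> nat list" where
  "var_record i [] = [trm_fact (Var i) []]"
| "var_record 0 (x # xs) = [trm_fact (Var 0) (x # xs)]"
| "var_record (Suc i) (x # xs) = trm_fact (Var (Suc i)) (x # xs) # var_record i xs"

primrec trm_record :: "trm \<Rightarrow> nat list \<Rightarrow> nat list" where
  "trm_record (Var i) xs = var_record i xs"
| "trm_record Zero xs = [trm_fact Zero xs]"
| "trm_record (Sc t) xs = trm_fact (Sc t) xs # trm_record t xs"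
| "trm_record (Pl s t) xs = trm_fact (Pl s t) xs # trm_record s xs @ trm_record t xs"
| "trm_record (Tm s t) xs = trm_fact (Tm s t) xs # trm_record s xs @ trm_record t xs"

primrec fm_record :: "fm \<Rightarrow> nat list \<Rightarrow> nat list" where
  "fm_record (Eq s t) xs = fm_fact (Eq s t) xs # trm_record s xs @ trm_record t xs"
| "fm_record (Lt s t) xs = fm_fact (Lt s t) xs # trm_record s xs @ trm_record t xs"
| "fm_record (Mem i t) xs = [fm_fact (Mem i t) xs]"
| "fm_record (Neg p) xs = fm_fact (Neg p) xs # fm_record p xs"
| "fm_record (Conj p q) xs = fm_fact (Conj p q) xs # fm_record p xs @ fm_record q xs"
| "fm_record (Disj p q) xs = fm_fact (Disj p q) xs # fm_record p xs @ fm_record q xs"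
| "fm_record (BEx t p) xs = fm_fact (BEx t p) xs # trm_record t xs @
      concat (map (\<lambda>x. fm_record p (x # xs)) [0..<evt (list_env xs) t])"
| "fm_record (BAll t p) xs = fm_fact (BAll t p) xs # trm_record t xs @
      concat (map (\<lambda>x. fm_record p (x # xs)) [0..<evt (list_env xs) t])"
| "fm_record (Ex p) xs = [fm_fact (Ex p) xs]"
| "fm_record (All p) xs = [fm_fact (All p) xs]"

lemma trm_fact_in_var_record: "trm_fact (Var i) xs \<in> set (var_record i xs)"
  by (cases "(i, xs)" rule: var_record.cases) simp_all

lemma trm_fact_in_trm_record: "trm_fact t xs \<in> set (trm_record t xs)"
  by (cases t) (simp_all add: trm_fact_in_var_record)

lemma fm_fact_in_fm_record: "fm_fact p xs \<in> set (fm_record p xs)"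
  by (cases p) simp_all

lemma trm_fact_justified:
  assumes "set (trm_record t xs) \<subseteq> M" "\<forall>y\<in>M. y \<le> c"
  shows "entry_justified (\<lambda>y. y \<in> M) c (trm_fact t xs)"
proof -
  have sub: "trm_entry (code_trm s) (code_list xs) (evt (list_env xs) s) \<in> M \<and>
      code_trm s \<le> c \<and> evt (list_env xs) s \<le> c" if "set (trm_record s xs) \<subseteq> M" for s
  proof -
    have "trm_fact s xs \<in> M" using that trm_fact_in_trm_record by blast
    then show ?thesis using assms(2) trm_entry_le unfolding trm_fact_def by blast
  qed
  have hd: "trm_fact t xs \<le> c" using assms trm_fact_in_trm_record by blast
  then have bounds: "code_trm t \<le> c" "code_list xs \<le> c"
    unfolding trm_fact_def using trm_entry_le by blast+
  have "trm_justified (\<lambda>y. y \<in> M) c (code_trm t) (code_list xs) (evt (list_env xs) t)"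
  proof (cases t)
    case (Var i)
    show ?thesis
    proof (cases "(i, xs)" rule: var_record.cases)
      case (1 i)
      then show ?thesis using bounds Var by (simp add: trm_justified_Var_Nil list_env_def)
    next
      case (2 x ys)
      then show ?thesis using bounds Var ccons_le[of x "code_list ys" c]
        by (simp add: trm_justified_Var_0 list_env_def)
    next
      case (3 j x ys)
      have "trm_fact (Var j) ys \<in> M" using assms(1) Var 3 trm_fact_in_var_record by auto
      moreover have "Suc j \<le> c" "x \<le> c" "code_list ys \<le> c"
        using bounds Var 3 ccons_le[of x "code_list ys" c] by simp_all
      ultimately show ?thesis using Var 3 unfolding trm_fact_def
        by (simp add: list_env_Cons trm_justified_Var_Suc del: mult_Suc_right)
    qed
  next
    case Zero
    show ?thesis unfolding Zero code_trm.simps evt.simps by (rule trm_justified_Zero)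
  next
    case (Sc s)
    then have "set (trm_record s xs) \<subseteq> M" using assms(1) by simp
    from sub[OF this] show ?thesis unfolding Sc code_trm.simps evt.simps
      by (intro trm_justified_Sc) simp_all
  next
    case (Pl s u)
    then have "set (trm_record s xs) \<subseteq> M" "set (trm_record u xs) \<subseteq> M" using assms(1) by simp_all
    from sub[OF this(1)] sub[OF this(2)] show ?thesis unfolding Pl code_trm.simps evt.simps
      by (intro trm_justified_Pl) simp_all
  next
    case (Tm s u)
    then have "set (trm_record s xs) \<subseteq> M" "set (trm_record u xs) \<subseteq> M" using assms(1) by simp_all
    from sub[OF this(1)] sub[OF this(2)] show ?thesis unfolding Tm code_trm.simps evt.simps
      by (intro trm_justified_Tm) simp_all
  qed
  with hd show ?thesis unfolding trm_fact_def by (rule entry_justified_trm_entryI)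
qed

lemma fm_fact_justified:
  assumes "delta0 p" "set (fm_record p xs) \<subseteq> M" "\<forall>y\<in>M. y \<le> c"
  shows "entry_justified (\<lambda>y. y \<in> M) c (fm_fact p xs)"
proof -
  have tsub: "trm_entry (code_trm t) (code_list xs) (evt (list_env xs) t) \<in> M \<and>
      code_trm t \<le> c \<and> evt (list_env xs) t \<le> c" if "set (trm_record t xs) \<subseteq> M" for t
  proof -
    have "trm_fact t xs \<in> M" using that trm_fact_in_trm_record by blast
    then show ?thesis using assms(3) trm_entry_le unfolding trm_fact_def by blast
  qed
  have fsub: "fm_entry (code_fm q) (code_list ys) (of_bool (evf (list_env ys) no_sets q)) \<in> M"
    if "set (fm_record q ys) \<subseteq> M" for q ys
    using that fm_fact_in_fm_record unfolding fm_fact_def by blast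
  have hd: "fm_fact p xs \<le> c" using assms(2,3) fm_fact_in_fm_record by blast
  then have code: "code_fm p \<le> c" unfolding fm_fact_def using fm_entry_le by blast
  have "fm_justified (\<lambda>y. y \<in> M) c (code_fm p) (code_list xs) (of_bool (evf (list_env xs) no_sets p))"
  proof (cases p)
    case (Eq s t)
    then have "set (trm_record s xs) \<subseteq> M" "set (trm_record t xs) \<subseteq> M" using assms(2) by simp_all
    from tsub[OF this(1)] tsub[OF this(2)] show ?thesis unfolding Eq code_fm.simps evf.simps
      by (intro fm_justified_Eq) simp_all
  next
    case (Lt s t)
    then have "set (trm_record s xs) \<subseteq> M" "set (trm_record t xs) \<subseteq> M" using assms(2) by simp_all
    from tsub[OF this(1)] tsub[OF this(2)] show ?thesis unfolding Lt code_fm.simps evf.simps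
      by (intro fm_justified_Lt) simp_all
  next
    case (Mem i t)
    with code have "i \<le> c" "code_trm t \<le> c" using cpair_le[of i "code_trm t" c] by simp_all
    then show ?thesis unfolding Mem code_fm.simps evf.simps of_bool_eq(1) by (rule fm_justified_Mem)
  next
    case (Neg q)
    have "code_fm q \<le> c" using code Neg by simp
    moreover have "set (fm_record q xs) \<subseteq> M" using assms(2) Neg by simp
    ultimately show ?thesis unfolding Neg code_fm.simps evf.simps
      by (rule fm_justified_Neg[where mem = "\<lambda>y. y \<in> M", OF _ fsub])
  next
    case (Conj q1 q2)
    have "code_fm q1 \<le> c" "code_fm q2 \<le> c"
      using code Conj cpair_le[of "code_fm q1" "code_fm q2" c] by simp_all
    moreover have "set (fm_record q1 xs) \<subseteq> M" "set (fm_record q2 xs) \<subseteq> M"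
      using assms(2) Conj by simp_all
    ultimately show ?thesis unfolding Conj code_fm.simps evf.simps
      by (rule fm_justified_Conj[where mem = "\<lambda>y. y \<in> M", OF _ _ fsub fsub])
  next
    case (Disj q1 q2)
    have "code_fm q1 \<le> c" "code_fm q2 \<le> c"
      using code Disj cpair_le[of "code_fm q1" "code_fm q2" c] by simp_all
    moreover have "set (fm_record q1 xs) \<subseteq> M" "set (fm_record q2 xs) \<subseteq> M"
      using assms(2) Disj by simp_all
    ultimately show ?thesis unfolding Disj code_fm.simps evf.simps
      by (rule fm_justified_Disj[where mem = "\<lambda>y. y \<in> M", OF _ _ fsub fsub])
  next
    case (BEx t q)
    have "code_trm t \<le> c" "code_fm q \<le> c"
      using code BEx cpair_le[of "code_trm t" "code_fm q" c] by simp_all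
    moreover have "set (trm_record t xs) \<subseteq> M" using assms(2) BEx by simp
    moreover have "fm_entry (code_fm q) (ccons x (code_list xs))
        (of_bool (evf (case_nat x (list_env xs)) no_sets q)) \<in> M" if "x < evt (list_env xs) t" for x
    proof -
      have "set (fm_record q (x # xs)) \<subseteq> M" using assms(2) BEx that by (simp add: UN_subset_iff)
      from fsub[OF this] show ?thesis by (simp add: list_env_Cons)
    qed
    ultimately show ?thesis unfolding BEx code_fm.simps evf.simps using tsub
      by (intro fm_justified_BEx[where mem = "\<lambda>y. y \<in> M"]) simp_all
  next
    case (BAll t q)
    have "code_trm t \<le> c" "code_fm q \<le> c"
      using code BAll cpair_le[of "code_trm t" "code_fm q" c] by simp_all
    moreover have "set (trm_record t xs) \<subseteq> M" using assms(2) BAll by simp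
    moreover have "fm_entry (code_fm q) (ccons x (code_list xs))
        (of_bool (evf (case_nat x (list_env xs)) no_sets q)) \<in> M" if "x < evt (list_env xs) t" for x
    proof -
      have "set (fm_record q (x # xs)) \<subseteq> M" using assms(2) BAll that by (simp add: UN_subset_iff)
      from fsub[OF this] show ?thesis by (simp add: list_env_Cons)
    qed
    ultimately show ?thesis unfolding BAll code_fm.simps evf.simps using tsub
      by (intro fm_justified_BAll[where mem = "\<lambda>y. y \<in> M"]) simp_all
  qed (use assms(1) in simp_all)
  with hd show ?thesis unfolding fm_fact_def by (rule entry_justified_fm_entryI)
qed

lemma var_record_justified:
  assumes "set (var_record i xs) \<subseteq> M" "\<forall>y\<in>M. y \<le> c" "y \<in> set (var_record i xs)"
  shows "entry_justified (\<lambda>y. y \<in> M) c y"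
  using assms(1,3)
proof (induction i xs rule: var_record.induct)
  case (1 i)
  then show ?case using trm_fact_justified[of "Var i" "[]" M c] assms(2) by simp
next
  case (2 x xs)
  then show ?case using trm_fact_justified[of "Var 0" "x # xs" M c] assms(2) by simp
next
  case (3 i x xs)
  then show ?case using trm_fact_justified[of "Var (Suc i)" "x # xs" M c] assms(2) by auto
qed

lemma trm_record_justified:
  assumes "set (trm_record t xs) \<subseteq> M" "\<forall>y\<in>M. y \<le> c" "y \<in> set (trm_record t xs)"
  shows "entry_justified (\<lambda>y. y \<in> M) c y"
  using assms(1,3)
proof (induction t)
  case (Var i)
  then show ?case using var_record_justified assms(2) by simp
next
  case Zero
  then show ?case using trm_fact_justified[of Zero xs M c] assms(2) by simp
next
  case (Sc t)
  then show ?case using trm_fact_justified[of "Sc t" xs M c] assms(2) by auto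
next
  case (Pl s t)
  then show ?case using trm_fact_justified[of "Pl s t" xs M c] assms(2) by auto
next
  case (Tm s t)
  then show ?case using trm_fact_justified[of "Tm s t" xs M c] assms(2) by auto
qed

lemma fm_record_justified:
  assumes "delta0 p" "set (fm_record p xs) \<subseteq> M" "\<forall>y\<in>M. y \<le> c" "y \<in> set (fm_record p xs)"
  shows "entry_justified (\<lambda>y. y \<in> M) c y"
  using assms(1,2,4)
proof (induction p arbitrary: xs)
  case (Eq s t)
  then show ?case
    using fm_fact_justified[OF Eq.prems(1,2) assms(3)] trm_record_justified[OF _ assms(3)]
    by auto
next
  case (Lt s t)
  then show ?case
    using fm_fact_justified[OF Lt.prems(1,2) assms(3)] trm_record_justified[OF _ assms(3)]
    by auto
next
  case (Mem i t)
  then show ?case using fm_fact_justified[OF Mem.prems(1,2) assms(3)] by simp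
next
  case (Neg q)
  then show ?case using fm_fact_justified[OF Neg.prems(1,2) assms(3)] by auto
next
  case (Conj q1 q2)
  then show ?case using fm_fact_justified[OF Conj.prems(1,2) assms(3)] by auto
next
  case (Disj q1 q2)
  then show ?case using fm_fact_justified[OF Disj.prems(1,2) assms(3)] by auto
next
  case (BEx t q)
  then show ?case
    using fm_fact_justified[OF BEx.prems(1,2) assms(3)] trm_record_justified[OF _ assms(3)]
    by (auto simp: UN_subset_iff)
next
  case (BAll t q)
  then show ?case
    using fm_fact_justified[OF BAll.prems(1,2) assms(3)] trm_record_justified[OF _ assms(3)]
    by (auto simp: UN_subset_iff)
qed simp_all

lemma good_record_exists:
  assumes "delta0 p"
  shows "\<exists>c d len. good_record c d len \<and> in_seq c d len (fm_fact p xs)"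
proof -
  let ?L = "fm_record p xs"
  obtain c d where cd: "\<forall>j<length ?L. gbeta c d j = ?L ! j" using gbeta_exists by blast
  have seq: "in_seq c d (length ?L) = (\<lambda>y. y \<in> set ?L)"
    by (rule ext) (auto simp: in_seq_def in_set_conv_nth cd)
  have "y \<le> c" if "y \<in> set ?L" for y
  proof -
    from that obtain j where "j < length ?L" "y = ?L ! j" by (auto simp: in_set_conv_nth)
    then show ?thesis using cd gbeta_le by metis
  qed
  then have "justified_record (\<lambda>y. y \<in> set ?L) c"
    unfolding justified_record_def using fm_record_justified[OF assms, of xs "set ?L" c] by blast
  then have "good_record c d (length ?L)" by (simp only: good_record_iff seq)
  moreover have "in_seq c d (length ?L) (fm_fact p xs)" unfolding seq by (rule fm_fact_in_fm_record)
  ultimately show ?thesis by blast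
qed

definition refutable :: "nat \<Rightarrow> nat \<Rightarrow> bool" where
  "refutable D R \<longleftrightarrow> (\<exists>z. refuted_below z D R)"

lemma refutable_iff:
  assumes "delta0 p"
  shows "refutable (code_fm p) (code_list xs) \<longleftrightarrow> (\<exists>x. \<not> evf (list_env (x # xs)) no_sets p)"
proof
  assume "refutable (code_fm p) (code_list xs)"
  then obtain x c d len where "good_record c d len"
    and seq: "in_seq c d len (fm_entry (code_fm p) (code_list (x # xs)) 0)"
    unfolding refutable_def refuted_below_def by auto
  then have "justified_record (in_seq c d len) c" by (simp add: good_record_iff)
  from fm_entry_sound[OF this seq] show "\<exists>x. \<not> evf (list_env (x # xs)) no_sets p" by auto
next
  assume "\<exists>x. \<not> evf (list_env (x # xs)) no_sets p"
  then obtain x where x: "\<not> evf (list_env (x # xs)) no_sets p" by blast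
  from good_record_exists[OF assms, of "x # xs"] x obtain c d len where
    "good_record c d len" "in_seq c d len (fm_entry (code_fm p) (ccons x (code_list xs)) 0)"
    by (auto simp: fm_fact_def)
  moreover have "x \<le> x + c + d + len" "c \<le> x + c + d + len" "d \<le> x + c + d + len" "len \<le> x + c + d + len"
    by simp_all
  ultimately have "refuted_below (x + c + d + len) (code_fm p) (code_list xs)"
    unfolding refuted_below_def by blast
  then show "refutable (code_fm p) (code_list xs)" unfolding refutable_def by blast
qed

section \<open>A universal \<open>\<Sigma>\<^sub>k\<^sub>+\<^sub>1\<close> relation and its diagonal\<close>

definition ccons_trm :: "trm \<Rightarrow> trm \<Rightarrow> trm" where
  "ccons_trm x r = Sc (Pl (Tm (Pl x r) (Pl x r)) x)"

lemma evt_ccons_trm [simp]: "evt e (ccons_trm x r) = ccons (evt e x) (evt e r)"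
  by (simp add: ccons_trm_def ccons_def cpair_def)

primrec sigma_univ :: "nat \<Rightarrow> nat \<Rightarrow> nat \<Rightarrow> bool" where
  "sigma_univ 0 D R = refutable D R"
| "sigma_univ (Suc k) D R = (\<exists>y. \<not> sigma_univ k D (ccons y R))"

definition univ_step :: "nat \<Rightarrow> trm" where
  "univ_step i = (if i = 0 then Var 1 else if i = 1 then ccons_trm (Var 0) (Var 2) else Var (Suc i))"

primrec univ_fm :: "nat \<Rightarrow> fm" where
  "univ_fm 0 = Ex (Neg (Neg (compile_fm [] refutedN)))"
| "univ_fm (Suc k) = Ex (Neg (subst_vars univ_step (univ_fm k)))"

lemma evf_univ_fm: "evf e X (univ_fm k) = sigma_univ k (e 0) (e 1)"
proof (induction k arbitrary: e)
  case 0
  then show ?case by (simp add: evf_compile_fm_Nil evnf_refutedN refutable_def)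
next
  case (Suc k)
  have "(\<lambda>i. evt (case_nat y e) (univ_step i)) 0 = e 0"
    "(\<lambda>i. evt (case_nat y e) (univ_step i)) 1 = ccons y (e 1)" for y
    by (auto simp: univ_step_def)
  then show ?case using Suc by (simp add: evf_subst_vars)
qed

lemma sigma_fm_univ_fm: "sigma_fm (Suc k) (univ_fm k)"
  by (induction k) (auto simp: delta0_compile_fm intro: sigma_fm_subst_fm)

lemma sigma_univ_code_fm:
  "delta0 d \<Longrightarrow>
    sigma_univ k (code_fm d) (code_list xs) = evf (list_env xs) no_sets (exneg (Suc k) d)"
proof (induction k arbitrary: xs)
  case 0
  then show ?case by (simp add: refutable_iff list_env_Cons)
next
  case (Suc k)
  have "sigma_univ (Suc k) (code_fm d) (code_list xs) =
      (\<exists>y. \<not> sigma_univ k (code_fm d) (code_list (y # xs)))"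
    by simp
  also have "\<dots> = (\<exists>y. \<not> evf (list_env (y # xs)) no_sets (exneg (Suc k) d))"
    by (simp only: Suc.IH[OF Suc.prems])
  finally show ?case by (simp add: list_env_Cons)
qed

definition diag_set :: "nat \<Rightarrow> nat set" where
  "diag_set k = {h. sigma_univ k h (code_list [h])}"

lemma sigma_definable_diag_set: "sigma_definable (Suc k) (\<lambda>e X. e 0 \<in> diag_set k)"
proof -
  have "sigma_definable (Suc k) (\<lambda>e X. sigma_univ k (e 0) (e 1))"
    using sigma_fm_univ_fm evf_univ_fm by (intro sigma_definableI)
  from sigma_definable_subst[OF this, of "\<lambda>i. if i = 0 then Var 0 else ccons_trm (Var 0) Zero"]
  show ?thesis by (simp add: diag_set_def)
qed

lemma diag_set_compl_not_sigma:
  assumes "sigma_fm (Suc k) p"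
  shows "\<exists>h. evf (list_env [h]) no_sets p \<noteq> (h \<notin> diag_set k)"
proof -
  obtain d where d: "delta0 d" "p = exneg (Suc k) d" using assms sigma_fm_iff_exneg by blast
  let ?h = "code_fm d"
  have "?h \<in> diag_set k \<longleftrightarrow> sigma_univ k ?h (code_list [?h])" by (simp add: diag_set_def)
  also have "\<dots> \<longleftrightarrow> evf (list_env [?h]) no_sets p" by (simp only: sigma_univ_code_fm[OF d(1)] d(2))
  finally show ?thesis by blast
qed

section \<open>Equivalence relations with classes of at most two elements\<close>

lemma graph_eq_offdiag_if_small_classes:
  assumes "irrefl G" "G\<^sup>* = E"
    and partner: "\<And>a b c. (a, b) \<in> E \<Longrightarrow> (a, c) \<in> E \<Longrightarrow> a \<noteq> b \<Longrightarrow> a \<noteq> c \<Longrightarrow> b = c"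
  shows "G = E - Id"
proof (intro set_eqI iffI)
  fix ab assume "ab \<in> G"
  then show "ab \<in> E - Id" using assms(1,2) by (auto simp: irrefl_def)
next
  fix ab assume ab: "ab \<in> E - Id"
  obtain a b where [simp]: "ab = (a, b)" by fastforce
  from ab have "(a, b) \<in> G\<^sup>*" "a \<noteq> b" using assms(2) by auto
  then show "ab \<in> G"
  proof (cases rule: converse_rtranclE)
    case (step c)
    then have "(a, c) \<in> E" "a \<noteq> c" using assms(1,2) by (auto simp: irrefl_def)
    then show ?thesis using partner ab step by auto
  qed simp
qed

definition pair_equiv :: "nat set \<Rightarrow> (nat \<times> nat) set" where
  "pair_equiv D = {(a, b). a div 2 = b div 2 \<and> (a = b \<or> a div 2 \<in> D)}"

lemma equiv_pair_equiv: "equiv UNIV (pair_equiv D)"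
  by (rule equivI) (auto simp: pair_equiv_def refl_on_def sym_def trans_def)

lemma pair_equiv_partner:
  "(a, b) \<in> pair_equiv D \<Longrightarrow> (a, c) \<in> pair_equiv D \<Longrightarrow> a \<noteq> b \<Longrightarrow> a \<noteq> c \<Longrightarrow> b = c"
  unfolding pair_equiv_def by auto

lemma pair_equiv_double: "(2 * h, Suc (2 * h)) \<in> pair_equiv D \<longleftrightarrow> h \<in> D"
  by (simp add: pair_equiv_def)

lemma sigma_definable_pair_equiv:
  assumes "sigma_definable (Suc k) (\<lambda>e X. e 0 \<in> D)"
  shows "sigma_definable (Suc k) (\<lambda>e X. (e 0, e 1) \<in> pair_equiv D)"
proof -
  define half_of :: "trm \<Rightarrow> fm" where
    "half_of t = Disj (Eq t (Pl (Var 0) (Var 0))) (Eq t (Sc (Pl (Var 0) (Var 0))))" for t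
  let ?t = "Conj (half_of (Var 1)) (half_of (Var 2))"
  from assms have "sigma_definable (Suc k) (\<lambda>e X. e 0 \<in> D \<and> evf e X ?t)"
    by (rule sigma_definable_conj) (simp add: half_of_def)
  from sigma_definable_ex[OF this]
  have "sigma_definable (Suc k) (\<lambda>e X. \<exists>h. h \<in> D \<and> evf (case_nat h e) X ?t)" by simp
  from sigma_definable_disj[OF this, of "Eq (Var 0) (Var 1)"]
  have "sigma_definable (Suc k)
      (\<lambda>e X. (\<exists>h. h \<in> D \<and> evf (case_nat h e) X ?t) \<or> evf e X (Eq (Var 0) (Var 1)))"
    by simp
  moreover have "(\<exists>h. h \<in> D \<and> evf (case_nat h e) X ?t) \<or> evf e X (Eq (Var 0) (Var 1)) \<longleftrightarrow>
      (e 0, e 1) \<in> pair_equiv D" for e X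
    unfolding pair_equiv_def half_of_def by auto
  ultimately show ?thesis by (rule sigma_definable_cong)
qed

lemma Sigma_nat2_if_sigma_definable:
  "sigma_definable n (\<lambda>e X. (e 0, e 1) \<in> R) \<Longrightarrow> Sigma_nat2 n R"
  unfolding sigma_definable_def Sigma_nat2_def by auto

lemma not_graphable_Pi_nat2:
  "\<not> graphable (Pi_nat2 (Suc k)) (pair_equiv (diag_set k))"
proof
  assume "graphable (Pi_nat2 (Suc k)) (pair_equiv (diag_set k))"
  then obtain G where G: "Pi_nat2 (Suc k) G" "irrefl G" "G\<^sup>* = pair_equiv (diag_set k)"
    unfolding graphable_def by blast
  then have G_eq: "G = pair_equiv (diag_set k) - Id"
    using pair_equiv_partner by (intro graph_eq_offdiag_if_small_classes) blast+
  from G(1) obtain p where p: "sigma_fm (Suc k) p"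
    "\<And>a b. (a, b) \<notin> G \<longleftrightarrow> evf (\<lambda>i. if i = 0 then a else if i = 1 then b else 0) no_sets p"
    unfolding Pi_nat2_def Sigma_nat2_def by auto
  let ?\<sigma> = "\<lambda>i. if i = 0 then Pl (Var 0) (Var 0) else if i = 1 then Sc (Pl (Var 0) (Var 0)) else Zero"
  have "evf (list_env [h]) no_sets (subst_vars ?\<sigma> p) \<longleftrightarrow> h \<notin> diag_set k" for h
  proof -
    have env: "(\<lambda>i. evt (list_env [h]) (?\<sigma> i)) =
        (\<lambda>i. if i = 0 then 2 * h else if i = 1 then Suc (2 * h) else 0)"
      by (auto simp: list_env_def)
    have "evf (list_env [h]) no_sets (subst_vars ?\<sigma> p) \<longleftrightarrow> (2 * h, Suc (2 * h)) \<notin> G"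
      unfolding evf_subst_vars env p(2) ..
    also have "\<dots> \<longleftrightarrow> h \<notin> diag_set k" by (simp add: G_eq pair_equiv_double)
    finally show ?thesis .
  qed
  with diag_set_compl_not_sigma[OF sigma_fm_subst_fm[OF p(1)]] show False by blast
qed

lemma inj_chi: "inj chi"
  by (rule injI) (metis chi_def)

definition cantor_lift :: "(nat \<times> nat) set \<Rightarrow> (cantor \<times> cantor) set" where
  "cantor_lift E = Id \<union> map_prod chi chi ` E"

lemma equiv_Id_Un_map_prod:
  assumes "equiv UNIV E" "inj f"
  shows "equiv UNIV (Id \<union> map_prod f f ` E)"
proof (rule equivI)
  show "refl (Id \<union> map_prod f f ` E)" by (rule refl_onI) auto
  show "sym (Id \<union> map_prod f f ` E)"
    using assms(1) by (auto simp: equiv_def sym_def)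
  show "trans (Id \<union> map_prod f f ` E)"
    using assms by (auto simp: equiv_def trans_def inj_eq)
qed simp

lemma Id_Un_map_prod_partner:
  assumes "inj f" "\<And>a b c. (a, b) \<in> E \<Longrightarrow> (a, c) \<in> E \<Longrightarrow> a \<noteq> b \<Longrightarrow> a \<noteq> c \<Longrightarrow> b = c"
    and "(x, y) \<in> Id \<union> map_prod f f ` E" "(x, z) \<in> Id \<union> map_prod f f ` E" "x \<noteq> y" "x \<noteq> z"
  shows "y = z"
  using assms by (auto simp: inj_eq)

lemma Sigma_cantor2_iff:
  "Sigma_cantor2 n R \<longleftrightarrow>
    (\<exists>p. sigma_fm n p \<and> (\<forall>x y. (x, y) \<in> R \<longleftrightarrow> evf (\<lambda>_. 0) (cantor_env x y) p))"
  unfolding Sigma_cantor2_def cantor_env_def by (simp add: fun_eq_iff)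

lemma Sigma_cantor2_if_sigma_definable:
  assumes "sigma_definable n (\<lambda>e X. (X 0, X 1) \<in> R)"
  shows "Sigma_cantor2 n R"
proof -
  from assms obtain p where "sigma_fm n p" "\<And>e X. evf e X p \<longleftrightarrow> (X 0, X 1) \<in> R"
    unfolding sigma_definable_def by blast
  then show ?thesis unfolding Sigma_cantor2_iff by (intro exI[of _ p]) (simp add: cantor_env_def)
qed

lemma map_prod_image_iff: "inj f \<Longrightarrow> (f a, f b) \<in> map_prod f f ` E \<longleftrightarrow> (a, b) \<in> E"
  by (auto simp: inj_eq)

lemma Sigma_cantor2_cantor_lift:
  assumes "sigma_definable (Suc (Suc k)) (\<lambda>e X. (e 0, e 1) \<in> E)" "refl E"
  shows "Sigma_cantor2 (Suc (Suc k)) (cantor_lift E)"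
proof -
  define iff_fm :: "fm \<Rightarrow> fm \<Rightarrow> fm" where "iff_fm p q = Disj (Conj p q) (Conj (Neg p) (Neg q))" for p q
  define C where "C = Disj (Conj (Eq (Var 2) (Var 1)) (iff_fm (Mem 0 (Var 0)) (Mem 1 (Var 0))))
    (Conj (Neg (Eq (Var 2) (Var 1)))
      (Conj (iff_fm (Mem 0 (Var 0)) (Eq (Var 0) (Var 2))) (iff_fm (Mem 1 (Var 0)) (Eq (Var 0) (Var 1)))))"
  have C: "evf (case_nat i (case_nat b (case_nat a e))) X C \<longleftrightarrow>
      (a = b \<and> (X 0 i \<longleftrightarrow> X 1 i)) \<or> (a \<noteq> b \<and> (X 0 i \<longleftrightarrow> i = a) \<and> (X 1 i \<longleftrightarrow> i = b))" for i a b e X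
    by (auto simp: C_def iff_fm_def)
  from sigma_definable_subst[OF assms(1), of "\<lambda>i. if i = 0 then Var 1 else Var 0"]
  have "sigma_definable (Suc (Suc k)) (\<lambda>e X. (e 1, e 0) \<in> E)" by simp
  \<comment> \<open>\<open>x = chi a\<close> is a \<open>\<Pi>\<^sub>1\<close> condition; absorbing it needs two quantifier blocks\<close>
  from sigma_definable_conj_all[OF this, of C]
  have "sigma_definable (Suc (Suc k)) (\<lambda>e X. (\<forall>i. evf (case_nat i e) X C) \<and> (e 1, e 0) \<in> E)"
    by (simp add: C_def iff_fm_def)
  from sigma_definable_ex[OF sigma_definable_ex[OF this]]
  have "sigma_definable (Suc (Suc k))
      (\<lambda>e X. \<exists>a b. (\<forall>i. evf (case_nat i (case_nat b (case_nat a e))) X C) \<and> (a, b) \<in> E)"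
    by simp
  moreover have "(\<exists>a b. (\<forall>i. evf (case_nat i (case_nat b (case_nat a e))) X C) \<and> (a, b) \<in> E) \<longleftrightarrow>
      (X 0, X 1) \<in> cantor_lift E" for e X
  proof
    assume "\<exists>a b. (\<forall>i. evf (case_nat i (case_nat b (case_nat a e))) X C) \<and> (a, b) \<in> E"
    then obtain a b where ab: "\<forall>i. evf (case_nat i (case_nat b (case_nat a e))) X C" "(a, b) \<in> E"
      by blast
    show "(X 0, X 1) \<in> cantor_lift E"
    proof (cases "a = b")
      case True
      then have "X 0 = X 1" using ab(1) C by blast
      then show ?thesis by (simp add: cantor_lift_def)
    next
      case False
      then have "X 0 = chi a" "X 1 = chi b" using ab(1) C by (auto simp: chi_def)
      then show ?thesis using ab(2) by (auto simp: cantor_lift_def)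
    qed
  next
    assume "(X 0, X 1) \<in> cantor_lift E"
    then consider "X 0 = X 1" | a b where "X 0 = chi a" "X 1 = chi b" "(a, b) \<in> E"
      by (auto simp: cantor_lift_def)
    then show "\<exists>a b. (\<forall>i. evf (case_nat i (case_nat b (case_nat a e))) X C) \<and> (a, b) \<in> E"
    proof cases
      case 1
      then show ?thesis using assms(2) C by (metis refl_onD UNIV_I)
    next
      case (2 a b)
      then show ?thesis using C by (intro exI[of _ a] exI[of _ b]) (auto simp: chi_def)
    qed
  qed
  ultimately have "sigma_definable (Suc (Suc k)) (\<lambda>e X. (X 0, X 1) \<in> cantor_lift E)"
    by (rule sigma_definable_cong)
  then show ?thesis by (rule Sigma_cantor2_if_sigma_definable)
qed

lemma not_graphable_Pi_cantor2:
  "\<not> graphable (Pi_cantor2 (Suc k)) (cantor_lift (pair_equiv (diag_set k)))"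
proof
  let ?E = "cantor_lift (pair_equiv (diag_set k))"
  assume "graphable (Pi_cantor2 (Suc k)) ?E"
  then obtain G where G: "Pi_cantor2 (Suc k) G" "irrefl G" "G\<^sup>* = ?E"
    unfolding graphable_def by blast
  have G_eq: "G = ?E - Id"
    using G(2,3) Id_Un_map_prod_partner[OF inj_chi pair_equiv_partner]
    by (intro graph_eq_offdiag_if_small_classes) (auto simp: cantor_lift_def)
  from G(1) obtain p where p: "sigma_fm (Suc k) p"
    "\<And>x y. (x, y) \<notin> G \<longleftrightarrow> evf (\<lambda>_. 0) (cantor_env x y) p"
    unfolding Pi_cantor2_def Sigma_cantor2_iff by auto
  let ?q = "subst_fm (\<lambda>_. Zero) (Some (Pl (Var 0) (Var 0), Sc (Pl (Var 0) (Var 0)))) p"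
  have "evf (list_env [h]) no_sets ?q \<longleftrightarrow> h \<notin> diag_set k" for h
  proof -
    have "evf (list_env [h]) no_sets ?q \<longleftrightarrow> (chi (2 * h), chi (Suc (2 * h))) \<notin> G"
      by (simp add: evf_subst_fm p(2) list_env_def mult_2)
    also have "\<dots> \<longleftrightarrow> h \<notin> diag_set k"
      by (simp add: G_eq cantor_lift_def inj_eq[OF inj_chi] map_prod_image_iff[OF inj_chi]
          pair_equiv_double)
    finally show ?thesis .
  qed
  with diag_set_compl_not_sigma[OF sigma_fm_subst_fm[OF p(1)]] show False by blast
qed

theorem proposition3p3:
  shows "(\<forall>n\<ge>2. \<exists>E :: (cantor \<times> cantor) set.
            equiv UNIV E \<and> Sigma_cantor2 n E \<and> \<not> graphable (Pi_cantor2 n) E)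
       \<and> (\<forall>n\<ge>1. \<exists>E :: (nat \<times> nat) set.
            equiv UNIV E \<and> Sigma_nat2 n E \<and> \<not> graphable (Pi_nat2 n) E)"
proof (intro conjI allI impI)
  fix n :: nat
  assume "n \<ge> 2"
  then obtain k where n: "n = Suc (Suc k)" by (metis add_2_eq_Suc le_Suc_ex)
  let ?E = "cantor_lift (pair_equiv (diag_set (Suc k)))"
  have "equiv UNIV ?E"
    unfolding cantor_lift_def by (rule equiv_Id_Un_map_prod[OF equiv_pair_equiv inj_chi])
  moreover have "Sigma_cantor2 n ?E"
    unfolding n using equiv_pair_equiv
    by (intro Sigma_cantor2_cantor_lift sigma_definable_pair_equiv sigma_definable_diag_set)
      (simp add: equiv_def)
  moreover have "\<not> graphable (Pi_cantor2 n) ?E"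
    unfolding n by (rule not_graphable_Pi_cantor2)
  ultimately show "\<exists>E :: (cantor \<times> cantor) set.
      equiv UNIV E \<and> Sigma_cantor2 n E \<and> \<not> graphable (Pi_cantor2 n) E"
    by blast
next
  fix n :: nat
  assume "n \<ge> 1"
  then obtain k where n: "n = Suc k" by (metis Suc_le_D One_nat_def)
  let ?E = "pair_equiv (diag_set k)"
  have "Sigma_nat2 n ?E"
    unfolding n
    by (intro Sigma_nat2_if_sigma_definable sigma_definable_pair_equiv sigma_definable_diag_set)
  then show "\<exists>E :: (nat \<times> nat) set. equiv UNIV E \<and> Sigma_nat2 n E \<and> \<not> graphable (Pi_nat2 n) E"
    using equiv_pair_equiv not_graphable_Pi_nat2 n by blast
qed

end
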